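(* Let $\mathbb{F}$ be a field of characteristic $p>0$, $0\neq h\in\mathbb{F}[x]$, and $A=A_h$ the unital subalgebra of the Weyl algebra $A_1$ generated by $x$ and $\hat y=yh$. Then: (a) for all $z\in\mathsf{Z}(A)$, $f\in\mathbb{F}[x]$ and $0\leq j\leq p-2$, $[\hat y,zfh^jy^j]\in[x,A]$, and $[\hat y,zfh^{p-1}y^{p-1}]=zhf'h^{p-1}y^{p-1}$; (b) $[x,A]+[\hat y,A]=\bigoplus_{\substack{i,j=0\\(i,j)\neq(p-1,p-1)}}^{p-1}\mathsf{Z}(A)hx^ih^jy^j$; (c) $hA=\big([x,A]+[\hat y,A]\big)\oplus h\mathsf{Z}(A)x^{p-1}h^{p-1}y^{p-1}$.
   Context: $A_1$ is generated by $x,y$ with $yx-xy=1$; $h^jy^j\in A$ for all $j\geq0$. $\mathsf{Z}(A)$ is the center of $A$. $[a,b]=ab-ba$ and $[u,A]=\{[u,a]:a\in A\}$. $f'$ is the derivative of $f$. *)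

theory Defs
  imports "HOL-Library.Poly_Mapping" "HOL-Computational_Algebra.Polynomial"
begin

text \<open>The first Weyl algebra A_1 over a field, realised concretely on its PBW basis:
  an element is a finitely supported family of coefficients c(i,j), standing for
  the sum of c(i,j) x^i y^j (normally ordered monomials).  Multiplication is
  determined by yx - xy = 1, i.e.
  (x^i y^j)(x^k y^m) = sum over l of (j choose l)(k choose l) l! x^(i+k-l) y^(j+m-l).
  NOTE: the product of the Weyl algebra is weyl_mult, NOT the (commutative)
  times operation of poly_mapping.\<close>

type_synonym 'a weyl = "(nat \<times> nat) \<Rightarrow>\<^sub>0 'a"

definition weyl_mult :: "'a::field weyl \<Rightarrow> 'a weyl \<Rightarrow> 'a weyl" (infixl "\<cdot>\<^sub>W" 70) where
  "a \<cdot>\<^sub>W b =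
     (\<Sum>(i,j)\<in>Poly_Mapping.keys a. \<Sum>(k,m)\<in>Poly_Mapping.keys b. \<Sum>l\<in>{..min j k}.
        Poly_Mapping.single (i + k - l, j + m - l)
          (Poly_Mapping.lookup a (i,j) * Poly_Mapping.lookup b (k,m) * of_nat ((j choose l) * (k choose l) * fact l)))"

definition weyl_one :: "'a::field weyl" where
  "weyl_one = Poly_Mapping.single (0,0) 1"

definition weyl_smult :: "'a::field \<Rightarrow> 'a weyl \<Rightarrow> 'a weyl" where
  "weyl_smult c a = Poly_Mapping.map (\<lambda>u. c * u) a"

definition weyl_x :: "'a::field weyl" where
  "weyl_x = Poly_Mapping.single (1,0) 1"

definition weyl_y :: "'a::field weyl" where
  "weyl_y = Poly_Mapping.single (0,1) 1"

primrec weyl_pow :: "'a::field weyl \<Rightarrow> nat \<Rightarrow> 'a weyl" where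
  "weyl_pow a 0 = weyl_one"
| "weyl_pow a (Suc n) = a \<cdot>\<^sub>W weyl_pow a n"

definition weyl_of_poly :: "'a::field poly \<Rightarrow> 'a weyl" where
  "weyl_of_poly f = (\<Sum>i\<le>degree f. Poly_Mapping.single (i,0) (coeff f i))"

definition weyl_comm :: "'a::field weyl \<Rightarrow> 'a weyl \<Rightarrow> 'a weyl" where
  "weyl_comm a b = a \<cdot>\<^sub>W b - b \<cdot>\<^sub>W a"

definition comm_set :: "'a::field weyl \<Rightarrow> 'a weyl set \<Rightarrow> 'a weyl set" where
  "comm_set u A = {weyl_comm u a | a. a \<in> A}"

inductive_set weyl_subalg :: "'a::field weyl set \<Rightarrow> 'a weyl set" for S where
  gen: "s \<in> S \<Longrightarrow> s \<in> weyl_subalg S"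
| one: "weyl_one \<in> weyl_subalg S"
| add: "a \<in> weyl_subalg S \<Longrightarrow> b \<in> weyl_subalg S \<Longrightarrow> a + b \<in> weyl_subalg S"
| smult: "a \<in> weyl_subalg S \<Longrightarrow> weyl_smult c a \<in> weyl_subalg S"
| mult: "a \<in> weyl_subalg S \<Longrightarrow> b \<in> weyl_subalg S \<Longrightarrow> a \<cdot>\<^sub>W b \<in> weyl_subalg S"

definition weyl_center :: "'a::field weyl set \<Rightarrow> 'a weyl set" where
  "weyl_center A = {z \<in> A. \<forall>a\<in>A. z \<cdot>\<^sub>W a = a \<cdot>\<^sub>W z}"

definition yhat :: "'a::field poly \<Rightarrow> 'a weyl" where
  "yhat h = weyl_y \<cdot>\<^sub>W weyl_of_poly h"

definition A_h :: "'a::field poly \<Rightarrow> 'a weyl set" where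
  "A_h h = weyl_subalg {weyl_x, yhat h}"

end

theory Submission
  imports Defs
begin

text \<open>Every element of \<open>A\<^sub>1\<close> has a normal form \<open>\<Sum>\<^sub>m g\<^sub>m(x) y\<^sup>m\<close>, and \<open>A\<close> consists of those
  with \<open>h\<^sup>m\<close> dividing \<open>g\<^sub>m\<close>. In characteristic \<open>p\<close>, \<open>y\<^sup>p\<close> and every \<open>g(x)\<close> with \<open>g' = 0\<close> are central
  in \<open>A\<^sub>1\<close>, and commuting with \<open>x\<close> and \<open>\<hat>y\<close> forces an element of \<open>Z(A)\<close> into \<open>F[x\<^sup>p, y\<^sup>p]\<close>.
  Writing each \<open>g\<^sub>m\<close> over \<open>F[x\<^sup>p]\<close> in the basis \<open>1, \<dots>, x\<^sup>p\<^sup>-\<^sup>1\<close> and \<open>m = p\<lfloor>m/p\<rfloor> + j\<close> shows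
  \<open>A = \<Sum>\<^sub>i\<^sub>,\<^sub>j\<^sub><\<^sub>p Z(A) x\<^sup>i h\<^sup>j y\<^sup>j\<close>. Hence \<open>[x, A]\<close> and \<open>[\<hat>y, A]\<close> are spanned over \<open>Z(A)\<close> by the
  commutators of these basis elements, which are computed from the Leibniz rule
  \<open>y\<^sup>n g = \<Sum>\<^sub>l (n choose l) g\<^sup>(\<^sup>l\<^sup>) y\<^sup>n\<^sup>-\<^sup>l\<close>; up to units they are exactly the \<open>h x\<^sup>i h\<^sup>j y\<^sup>j\<close> off the
  corner \<open>(p - 1, p - 1)\<close>. The sums are direct because the \<open>y\<^sup>s\<close>-coefficient of
  \<open>\<Sum> z\<^sub>i\<^sub>j h x\<^sup>i h\<^sup>j y\<^sup>j\<close> only involves \<open>j = s mod p\<close>, where the \<open>x\<^sup>i\<close> are independent over \<open>F[x\<^sup>p]\<close>.\<close>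

section \<open>The Weyl algebra as an associative algebra\<close>

definition weyl_mono_mult :: "nat \<times> nat \<Rightarrow> nat \<times> nat \<Rightarrow> 'a::field \<Rightarrow> 'a weyl" where
  "weyl_mono_mult u v c = (\<Sum>l\<le>min (snd u) (fst v).
      Poly_Mapping.single (fst u + fst v - l, snd u + snd v - l)
        (c * of_nat ((snd u choose l) * (fst v choose l) * fact l)))"

lemma weyl_mono_mult_add: "weyl_mono_mult u v (c + d) = weyl_mono_mult u v c + weyl_mono_mult u v d"
  by (simp add: weyl_mono_mult_def single_add distrib_right sum.distrib)

lemma weyl_mono_mult_0 [simp]: "weyl_mono_mult u v 0 = 0"
  by (simp add: weyl_mono_mult_def)

lemma weyl_mult_eq_sum:
  "a \<cdot>\<^sub>W b = (\<Sum>u\<in>Poly_Mapping.keys a. \<Sum>v\<in>Poly_Mapping.keys b.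
      weyl_mono_mult u v (Poly_Mapping.lookup a u * Poly_Mapping.lookup b v))"
  unfolding weyl_mult_def weyl_mono_mult_def by (simp add: case_prod_beta)

lemma sum_single_lookup: "(\<Sum>k\<in>Poly_Mapping.keys a. Poly_Mapping.single k (Poly_Mapping.lookup a k)) = a"
  by (rule poly_mapping_eqI) (auto simp: lookup_sum lookup_single when_def in_keys_iff)

lemma weyl_mult_eq_sum_superset:
  assumes "finite S" "Poly_Mapping.keys a \<subseteq> S" "finite T" "Poly_Mapping.keys b \<subseteq> T"
  shows "a \<cdot>\<^sub>W b = (\<Sum>u\<in>S. \<Sum>v\<in>T. weyl_mono_mult u v (Poly_Mapping.lookup a u * Poly_Mapping.lookup b v))"
proof -
  have "a \<cdot>\<^sub>W b = (\<Sum>u\<in>Poly_Mapping.keys a. \<Sum>v\<in>T.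
      weyl_mono_mult u v (Poly_Mapping.lookup a u * Poly_Mapping.lookup b v))"
    unfolding weyl_mult_eq_sum
    by (rule sum.cong[OF refl], rule sum.mono_neutral_left) (use assms in \<open>auto simp: in_keys_iff\<close>)
  also have "\<dots> = (\<Sum>u\<in>S. \<Sum>v\<in>T. weyl_mono_mult u v (Poly_Mapping.lookup a u * Poly_Mapping.lookup b v))"
    by (rule sum.mono_neutral_left) (use assms in \<open>auto simp: in_keys_iff\<close>)
  finally show ?thesis .
qed

lemma weyl_distrib_right: "(a + b) \<cdot>\<^sub>W c = a \<cdot>\<^sub>W c + b \<cdot>\<^sub>W c"
proof -
  let ?S = "Poly_Mapping.keys a \<union> Poly_Mapping.keys b" and ?T = "Poly_Mapping.keys c"
  have "Poly_Mapping.keys (a + b) \<subseteq> ?S" by (rule keys_add)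
  then show ?thesis
    by (simp add: weyl_mult_eq_sum_superset[of ?S _ ?T] lookup_add distrib_right
        weyl_mono_mult_add sum.distrib)
qed

lemma weyl_distrib_left: "c \<cdot>\<^sub>W (a + b) = c \<cdot>\<^sub>W a + c \<cdot>\<^sub>W b"
proof -
  let ?S = "Poly_Mapping.keys c" and ?T = "Poly_Mapping.keys a \<union> Poly_Mapping.keys b"
  have "Poly_Mapping.keys (a + b) \<subseteq> ?T" by (rule keys_add)
  then show ?thesis
    by (simp add: weyl_mult_eq_sum_superset[of ?S _ ?T] lookup_add distrib_left
        weyl_mono_mult_add sum.distrib)
qed

lemma weyl_mult_zero_left [simp]: "0 \<cdot>\<^sub>W a = 0"
  by (simp add: weyl_mult_eq_sum)

lemma weyl_mult_zero_right [simp]: "a \<cdot>\<^sub>W 0 = 0"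
  by (simp add: weyl_mult_eq_sum)

lemma weyl_minus_mult: "(- a) \<cdot>\<^sub>W b = - (a \<cdot>\<^sub>W b)"
  using weyl_distrib_right[of a "- a" b] by (simp add: eq_neg_iff_add_eq_0 add.commute)

lemma weyl_mult_minus: "b \<cdot>\<^sub>W (- a) = - (b \<cdot>\<^sub>W a)"
  using weyl_distrib_left[of b a "- a"] by (simp add: eq_neg_iff_add_eq_0 add.commute)

lemma weyl_diff_mult: "(a - b) \<cdot>\<^sub>W c = a \<cdot>\<^sub>W c - b \<cdot>\<^sub>W c"
  using weyl_distrib_right[of a "- b" c] by (simp add: weyl_minus_mult)

lemma weyl_mult_diff: "c \<cdot>\<^sub>W (a - b) = c \<cdot>\<^sub>W a - c \<cdot>\<^sub>W b"
  using weyl_distrib_left[of c a "- b"] by (simp add: weyl_mult_minus)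

lemma weyl_sum_mult: "(\<Sum>i\<in>S. f i) \<cdot>\<^sub>W b = (\<Sum>i\<in>S. f i \<cdot>\<^sub>W b)"
  by (induction S rule: infinite_finite_induct) (auto simp: weyl_distrib_right)

lemma weyl_mult_sum: "b \<cdot>\<^sub>W (\<Sum>i\<in>S. f i) = (\<Sum>i\<in>S. b \<cdot>\<^sub>W f i)"
  by (induction S rule: infinite_finite_induct) (auto simp: weyl_distrib_left)

lemma weyl_single_mult_single:
  "Poly_Mapping.single u c \<cdot>\<^sub>W Poly_Mapping.single v d = weyl_mono_mult u v (c * d)"
  by (subst weyl_mult_eq_sum_superset[of "{u}" _ "{v}"]) auto

lemma lookup_weyl_smult [simp]: "Poly_Mapping.lookup (weyl_smult c a) k = c * Poly_Mapping.lookup a k"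
  unfolding weyl_smult_def by transfer (simp add: when_def)

lemma weyl_smult_add: "weyl_smult c (a + b) = weyl_smult c a + weyl_smult c b"
  by (rule poly_mapping_eqI) (simp add: lookup_add distrib_left)

lemma weyl_smult_sum: "weyl_smult c (\<Sum>i\<in>S. f i) = (\<Sum>i\<in>S. weyl_smult c (f i))"
  by (rule poly_mapping_eqI) (simp add: lookup_sum sum_distrib_left)

lemma weyl_smult_single: "weyl_smult c (Poly_Mapping.single k d) = Poly_Mapping.single k (c * d)"
  by (rule poly_mapping_eqI) (simp add: lookup_single when_def)

lemma weyl_smult_smult [simp]: "weyl_smult c (weyl_smult d a) = weyl_smult (c * d) a"
  by (rule poly_mapping_eqI) (simp add: mult.assoc)

lemma weyl_smult_one [simp]: "weyl_smult 1 a = a"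
  by (rule poly_mapping_eqI) simp

lemma weyl_smult_zero_left [simp]: "weyl_smult 0 a = 0"
  by (rule poly_mapping_eqI) simp

lemma weyl_smult_zero_right [simp]: "weyl_smult c 0 = 0"
  by (rule poly_mapping_eqI) simp

lemma weyl_smult_add_left: "weyl_smult (c + d) a = weyl_smult c a + weyl_smult d a"
  by (rule poly_mapping_eqI) (simp add: lookup_add distrib_right)

lemma weyl_smult_diff: "weyl_smult c (a - b) = weyl_smult c a - weyl_smult c b"
  by (rule poly_mapping_eqI) (simp add: lookup_minus right_diff_distrib)

lemma weyl_smult_minus_left: "weyl_smult (- c) a = - weyl_smult c a"
  by (rule poly_mapping_eqI) simp

lemma weyl_smult_mult_left: "weyl_smult e a \<cdot>\<^sub>W b = weyl_smult e (a \<cdot>\<^sub>W b)"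
proof -
  have "Poly_Mapping.keys (weyl_smult e a) \<subseteq> Poly_Mapping.keys a"
    by (auto simp: in_keys_iff)
  then show ?thesis
    by (simp only: weyl_mult_eq_sum_superset[OF finite_keys _ finite_keys order_refl])
      (simp add: weyl_mult_eq_sum weyl_smult_sum weyl_mono_mult_def weyl_smult_single mult.assoc)
qed

lemma weyl_smult_mult_right: "b \<cdot>\<^sub>W weyl_smult e a = weyl_smult e (b \<cdot>\<^sub>W a)"
proof -
  have "Poly_Mapping.keys (weyl_smult e a) \<subseteq> Poly_Mapping.keys a"
    by (auto simp: in_keys_iff)
  then show ?thesis
    by (simp only: weyl_mult_eq_sum_superset[OF finite_keys order_refl finite_keys])
      (simp add: weyl_mult_eq_sum weyl_smult_sum weyl_mono_mult_def weyl_smult_single mult_ac)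
qed

lemma weyl_one_mult [simp]: "weyl_one \<cdot>\<^sub>W a = a"
proof -
  have "weyl_one \<cdot>\<^sub>W Poly_Mapping.single v d = Poly_Mapping.single v d" for v and d :: 'a
    by (simp add: weyl_one_def weyl_single_mult_single weyl_mono_mult_def)
  then show ?thesis
    by (subst (1 2) sum_single_lookup[symmetric]) (simp add: weyl_mult_sum)
qed

lemma weyl_mult_one [simp]: "a \<cdot>\<^sub>W weyl_one = a"
proof -
  have "Poly_Mapping.single v d \<cdot>\<^sub>W weyl_one = Poly_Mapping.single v d" for v and d :: 'a
    by (simp add: weyl_one_def weyl_single_mult_single weyl_mono_mult_def)
  then show ?thesis
    by (subst (1 2) sum_single_lookup[symmetric]) (simp add: weyl_sum_mult)
qed

lemma weyl_additive_eqI: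
  fixes a :: "'a::field weyl"
  assumes "\<And>k d. f (Poly_Mapping.single k d) = g (Poly_Mapping.single k d)"
    and "\<And>(S :: (nat \<times> nat) set) u. f (\<Sum>l\<in>S. u l) = (\<Sum>l\<in>S. f (u l))"
    and "\<And>(S :: (nat \<times> nat) set) u. g (\<Sum>l\<in>S. u l) = (\<Sum>l\<in>S. g (u l))"
  shows "f a = g a"
  using assms by (subst (1 2) sum_single_lookup[symmetric]) simp

lemma weyl_x_mult_single: "weyl_x \<cdot>\<^sub>W Poly_Mapping.single (k, m) c = Poly_Mapping.single (Suc k, m) c"
  by (simp add: weyl_x_def weyl_single_mult_single weyl_mono_mult_def)

lemma weyl_y_mult_single:
  "weyl_y \<cdot>\<^sub>W Poly_Mapping.single (k, m) c
     = Poly_Mapping.single (k, Suc m) c + Poly_Mapping.single (k - 1, m) (of_nat k * c)"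
proof (cases k)
  case 0
  then show ?thesis by (simp add: weyl_y_def weyl_single_mult_single weyl_mono_mult_def)
next
  case (Suc k')
  have "{..Suc 0} = {0, Suc 0}" by auto
  then show ?thesis
    using Suc by (simp add: weyl_y_def weyl_single_mult_single weyl_mono_mult_def mult.commute)
qed

lemma choose_mult_fact_Suc: "(k choose Suc s) * fact (Suc s) = (k choose s) * fact s * (k - s)"
proof -
  have "Suc s * (k choose Suc s) = (k - s) * (k choose s)"
    using binomial_absorption[of s k] binomial_absorb_comp[of k s] by simp
  then show ?thesis
    by (metis fact_Suc mult.assoc mult.commute of_nat_id)
qed

lemma weyl_mono_mult_0_left:
  "weyl_mono_mult (0, j) (k, m) d = (\<Sum>l\<le>j.
     Poly_Mapping.single (k - l, j + m - l) (d * of_nat ((j choose l) * (k choose l) * fact l)))"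
  unfolding weyl_mono_mult_def
  by simp (rule sum.mono_neutral_left,
    auto, metis binomial_eq_0 not_le of_nat_0 mult_zero_left mult_zero_right single_zero)

text \<open>The coefficients of the two sides are related by Pascal's rule in \<open>j\<close>.\<close>

lemma weyl_y_mult_mono_mult:
  "weyl_y \<cdot>\<^sub>W weyl_mono_mult (0, j) (k, m) d = weyl_mono_mult (0, Suc j) (k, m) d"
proof -
  define e where "e l = d * of_nat ((j choose l) * (k choose l) * fact l)" for l
  define s where "s l = Poly_Mapping.single (k - l, Suc j + m - l) (e l)" for l
  define t where "t l = Poly_Mapping.single (k - Suc l, j + m - l)
      (d * of_nat ((j choose l) * (k choose Suc l) * fact (Suc l)))" for l
  have shift_nat: "(j choose l) * (k choose Suc l) * fact (Suc l)
      = (k - l) * ((j choose l) * (k choose l) * fact l)" for l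
    using choose_mult_fact_Suc[of k l] by (metis mult.assoc mult.commute)
  have shift: "of_nat (k - l) * (d * of_nat ((j choose l) * (k choose l) * fact l))
      = d * (of_nat ((j choose l) * (k choose Suc l) * fact (Suc l)) :: 'a)" for l
    unfolding shift_nat by (simp only: of_nat_mult mult_ac)
  have "weyl_y \<cdot>\<^sub>W weyl_mono_mult (0, j) (k, m) d
      = (\<Sum>l\<le>j. Poly_Mapping.single (k - l, Suc (j + m - l)) (e l))
        + (\<Sum>l\<le>j. Poly_Mapping.single (k - Suc l, j + m - l) (of_nat (k - l) * e l))"
    by (simp add: weyl_mono_mult_0_left weyl_mult_sum weyl_y_mult_single sum.distrib e_def)
  also have "(\<Sum>l\<le>j. Poly_Mapping.single (k - l, Suc (j + m - l)) (e l)) = (\<Sum>l\<le>Suc j. s l)"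
    by (simp add: s_def e_def Suc_diff_le binomial_eq_0)
  also have "(\<Sum>l\<le>j. Poly_Mapping.single (k - Suc l, j + m - l) (of_nat (k - l) * e l))
      = (\<Sum>l\<le>j. t l)"
    by (rule sum.cong[OF refl]) (simp only: t_def e_def shift)
  also have "(\<Sum>l\<le>Suc j. s l) + (\<Sum>l\<le>j. t l) = s 0 + (\<Sum>l\<le>j. s (Suc l) + t l)"
    by (simp only: sum.atMost_Suc_shift[of s] sum.distrib add.assoc)
  also have "\<dots> = weyl_mono_mult (0, Suc j) (k, m) d"
    unfolding weyl_mono_mult_0_left sum.atMost_Suc_shift[of _ j]
    by (simp add: s_def t_def e_def single_add[symmetric] algebra_simps)
  finally show ?thesis .
qed

lemma weyl_y_funpow_single:
  "((\<cdot>\<^sub>W) weyl_y ^^ j) (Poly_Mapping.single (k, m) d) = weyl_mono_mult (0, j) (k, m) d"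
  by (induction j) (simp add: weyl_mono_mult_def, simp add: weyl_y_mult_mono_mult)

lemma weyl_x_funpow_single:
  "((\<cdot>\<^sub>W) weyl_x ^^ i) (Poly_Mapping.single (k, m) d) = Poly_Mapping.single (k + i, m) d"
  by (induction i) (simp_all add: weyl_x_mult_single)

lemma weyl_funpow_sum:
  "((\<cdot>\<^sub>W) a ^^ i) (\<Sum>l\<in>S. f l) = (\<Sum>l\<in>S. ((\<cdot>\<^sub>W) a ^^ i) (f l))"
  by (induction i) (simp_all add: weyl_mult_sum)

text \<open>A monomial acts by left multiplication as \<open>(x\<cdot>)\<^sup>i (y\<cdot>)\<^sup>j\<close>; this reduces associativity to
  the cases of left factor \<open>x\<close> and \<open>y\<close>.\<close>

lemma weyl_single_mult_eq_funpow:
  "Poly_Mapping.single (i, j) c \<cdot>\<^sub>W u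
     = weyl_smult c (((\<cdot>\<^sub>W) weyl_x ^^ i) (((\<cdot>\<^sub>W) weyl_y ^^ j) u))"
proof (rule weyl_additive_eqI[where a = u])
  fix k :: "nat \<times> nat" and d
  obtain k1 k2 where "k = (k1, k2)" by force
  then show "Poly_Mapping.single (i, j) c \<cdot>\<^sub>W Poly_Mapping.single k d
      = weyl_smult c (((\<cdot>\<^sub>W) weyl_x ^^ i) (((\<cdot>\<^sub>W) weyl_y ^^ j) (Poly_Mapping.single k d)))"
    by (simp add: weyl_single_mult_single weyl_y_funpow_single weyl_mono_mult_def weyl_funpow_sum
        weyl_x_funpow_single weyl_smult_sum weyl_smult_single algebra_simps)
qed (simp_all add: weyl_mult_sum weyl_funpow_sum weyl_smult_sum)

lemma weyl_x_mult_assoc: "(weyl_x \<cdot>\<^sub>W b) \<cdot>\<^sub>W c = weyl_x \<cdot>\<^sub>W (b \<cdot>\<^sub>W c)"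
proof (rule weyl_additive_eqI[where a = b])
  fix k :: "nat \<times> nat" and d
  obtain i j where "k = (i, j)" by force
  then show "(weyl_x \<cdot>\<^sub>W Poly_Mapping.single k d) \<cdot>\<^sub>W c = weyl_x \<cdot>\<^sub>W (Poly_Mapping.single k d \<cdot>\<^sub>W c)"
    by (simp add: weyl_x_mult_single weyl_single_mult_eq_funpow weyl_smult_mult_right)
qed (simp_all add: weyl_mult_sum weyl_sum_mult)

lemma weyl_y_mult_x_mult: "weyl_y \<cdot>\<^sub>W (weyl_x \<cdot>\<^sub>W u) = weyl_x \<cdot>\<^sub>W (weyl_y \<cdot>\<^sub>W u) + u"
proof (rule weyl_additive_eqI[where a = u])
  fix k :: "nat \<times> nat" and d :: 'a
  obtain i j where "k = (i, j)" by force
  then show "weyl_y \<cdot>\<^sub>W (weyl_x \<cdot>\<^sub>W Poly_Mapping.single k d)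
      = weyl_x \<cdot>\<^sub>W (weyl_y \<cdot>\<^sub>W Poly_Mapping.single k d) + Poly_Mapping.single k d"
    by (cases i) (simp_all add: weyl_x_mult_single weyl_y_mult_single weyl_distrib_left
        single_add[symmetric] algebra_simps)
qed (simp_all add: weyl_mult_sum sum.distrib)

lemma weyl_y_mult_x_funpow:
  "weyl_y \<cdot>\<^sub>W ((\<cdot>\<^sub>W) weyl_x ^^ k) u
     = ((\<cdot>\<^sub>W) weyl_x ^^ k) (weyl_y \<cdot>\<^sub>W u) + weyl_smult (of_nat k) (((\<cdot>\<^sub>W) weyl_x ^^ (k - 1)) u)"
proof (induction k)
  case (Suc k)
  have "weyl_x \<cdot>\<^sub>W weyl_smult (of_nat k) (((\<cdot>\<^sub>W) weyl_x ^^ (k - 1)) u)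
      = weyl_smult (of_nat k) (((\<cdot>\<^sub>W) weyl_x ^^ k) u)"
    by (cases k) (simp_all add: weyl_smult_mult_right)
  with Suc show ?case
    by (simp add: weyl_y_mult_x_mult weyl_distrib_left weyl_smult_add_left algebra_simps)
qed simp

lemma weyl_y_mult_assoc: "(weyl_y \<cdot>\<^sub>W b) \<cdot>\<^sub>W c = weyl_y \<cdot>\<^sub>W (b \<cdot>\<^sub>W c)"
proof (rule weyl_additive_eqI[where a = b])
  fix k :: "nat \<times> nat" and d
  obtain i j where "k = (i, j)" by force
  then show "(weyl_y \<cdot>\<^sub>W Poly_Mapping.single k d) \<cdot>\<^sub>W c = weyl_y \<cdot>\<^sub>W (Poly_Mapping.single k d \<cdot>\<^sub>W c)"
    by (simp add: weyl_y_mult_single weyl_distrib_right weyl_single_mult_eq_funpow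
        weyl_smult_mult_right weyl_y_mult_x_funpow weyl_smult_add algebra_simps)
qed (simp_all add: weyl_mult_sum weyl_sum_mult)

lemma weyl_mult_assoc: "(a \<cdot>\<^sub>W b) \<cdot>\<^sub>W c = a \<cdot>\<^sub>W (b \<cdot>\<^sub>W c)"
proof (rule weyl_additive_eqI[where a = a])
  have y: "((\<cdot>\<^sub>W) weyl_y ^^ j) b \<cdot>\<^sub>W c = ((\<cdot>\<^sub>W) weyl_y ^^ j) (b \<cdot>\<^sub>W c)" for j
    by (induction j) (simp_all add: weyl_y_mult_assoc)
  have xy: "((\<cdot>\<^sub>W) weyl_x ^^ i) (((\<cdot>\<^sub>W) weyl_y ^^ j) b) \<cdot>\<^sub>W c
      = ((\<cdot>\<^sub>W) weyl_x ^^ i) (((\<cdot>\<^sub>W) weyl_y ^^ j) (b \<cdot>\<^sub>W c))" for i j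
    by (induction i) (simp_all add: weyl_x_mult_assoc y)
  fix k :: "nat \<times> nat" and d
  obtain i j where "k = (i, j)" by force
  then show "(Poly_Mapping.single k d \<cdot>\<^sub>W b) \<cdot>\<^sub>W c = Poly_Mapping.single k d \<cdot>\<^sub>W (b \<cdot>\<^sub>W c)"
    by (simp add: weyl_single_mult_eq_funpow weyl_smult_mult_left xy)
qed (simp_all add: weyl_sum_mult)

section \<open>Normal form and the Leibniz rule\<close>

abbreviation yterm :: "'a::field poly \<Rightarrow> nat \<Rightarrow> 'a weyl" where
  "yterm g m \<equiv> weyl_of_poly g \<cdot>\<^sub>W weyl_pow weyl_y m"

lemma weyl_eqI: "(\<And>i j. Poly_Mapping.lookup a (i, j) = Poly_Mapping.lookup b (i, j)) \<Longrightarrow> a = b"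
  by (rule poly_mapping_eqI) (metis prod.collapse)

lemma lookup_weyl_of_poly: "Poly_Mapping.lookup (weyl_of_poly f) (i, j) = (if j = 0 then coeff f i else 0)"
  unfolding weyl_of_poly_def by (auto simp: lookup_sum lookup_single when_def coeff_eq_0 not_le)

lemma weyl_of_poly_add: "weyl_of_poly (f + g) = weyl_of_poly f + weyl_of_poly g"
  by (rule weyl_eqI) (simp add: lookup_add lookup_weyl_of_poly)

lemma weyl_of_poly_0 [simp]: "weyl_of_poly 0 = 0"
  by (rule weyl_eqI) (simp add: lookup_weyl_of_poly)

lemma weyl_of_poly_diff: "weyl_of_poly (f - g) = weyl_of_poly f - weyl_of_poly g"
  by (rule weyl_eqI) (simp add: lookup_minus lookup_weyl_of_poly)

lemma weyl_of_poly_smult: "weyl_of_poly (smult c f) = weyl_smult c (weyl_of_poly f)"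
  by (rule weyl_eqI) (simp add: lookup_weyl_of_poly)

lemma weyl_of_poly_sum: "weyl_of_poly (\<Sum>i\<in>S. f i) = (\<Sum>i\<in>S. weyl_of_poly (f i))"
  by (induction S rule: infinite_finite_induct) (simp_all add: weyl_of_poly_add)

lemma weyl_of_poly_monom: "weyl_of_poly (monom c k) = Poly_Mapping.single (k, 0) c"
  by (rule weyl_eqI) (simp add: lookup_weyl_of_poly lookup_single when_def)

lemma weyl_of_poly_1: "weyl_of_poly 1 = weyl_one"
  using weyl_of_poly_monom[of 1 0] by (simp add: weyl_one_def monom_0 one_pCons)

lemma weyl_of_poly_const: "weyl_of_poly [:c:] = weyl_smult c weyl_one"
  using weyl_of_poly_monom[of c 0] by (simp add: weyl_one_def monom_0 weyl_smult_single)

lemma weyl_of_poly_x: "weyl_of_poly [:0, 1:] = weyl_x"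
  using weyl_of_poly_monom[of 1 1] by (simp add: weyl_x_def monom_Suc monom_0 one_pCons)

lemma lookup_weyl_x_mult:
  "Poly_Mapping.lookup (weyl_x \<cdot>\<^sub>W u) (i, j) = (if i = 0 then 0 else Poly_Mapping.lookup u (i - 1, j))"
  by (rule weyl_additive_eqI[where a = u])
    (auto simp: weyl_x_mult_single lookup_single when_def weyl_mult_sum lookup_sum split: if_splits)

lemma weyl_of_poly_pCons:
  "weyl_of_poly (pCons a f) = weyl_smult a weyl_one + weyl_x \<cdot>\<^sub>W weyl_of_poly f"
proof -
  have "weyl_of_poly (pCons 0 f) = weyl_x \<cdot>\<^sub>W weyl_of_poly f"
    by (rule weyl_eqI) (simp add: lookup_weyl_x_mult lookup_weyl_of_poly coeff_pCons split: nat.split)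
  moreover have "pCons a f = [:a:] + pCons 0 f"
    by simp
  ultimately show ?thesis
    by (simp only: weyl_of_poly_add weyl_of_poly_const)
qed

lemma weyl_of_poly_mult: "weyl_of_poly (f * g) = weyl_of_poly f \<cdot>\<^sub>W weyl_of_poly g"
proof (induction f)
  case (pCons a f)
  have "pCons a f * g = smult a g + pCons 0 (f * g)"
    by simp
  moreover have "weyl_of_poly (pCons 0 (f * g)) = weyl_x \<cdot>\<^sub>W weyl_of_poly (f * g)"
    using weyl_of_poly_pCons[of 0 "f * g"] by simp
  ultimately show ?case
    by (simp add: weyl_of_poly_add weyl_of_poly_smult pCons weyl_of_poly_pCons weyl_distrib_right
        weyl_smult_mult_left weyl_x_mult_assoc)
qed simp

lemma weyl_pow_add: "weyl_pow a (m + n) = weyl_pow a m \<cdot>\<^sub>W weyl_pow a n"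
  by (induction m) (simp_all add: weyl_mult_assoc)

lemma weyl_pow_Suc_right: "weyl_pow a (Suc n) = weyl_pow a n \<cdot>\<^sub>W a"
  using weyl_pow_add[of a n 1] by simp

lemma weyl_of_poly_power: "weyl_of_poly (f ^ n) = weyl_pow (weyl_of_poly f) n"
  by (induction n) (simp_all add: weyl_of_poly_1 weyl_of_poly_mult)

lemma weyl_pow_x: "weyl_pow weyl_x n = weyl_of_poly (monom 1 n)"
  by (simp add: monom_altdef weyl_of_poly_power weyl_of_poly_x)

lemma weyl_pow_y: "weyl_pow weyl_y n = Poly_Mapping.single (0, n) 1"
  by (induction n) (simp_all add: weyl_one_def weyl_y_def weyl_single_mult_single weyl_mono_mult_def)

lemma yterm_eq_sum: "yterm g m = (\<Sum>i\<le>degree g. Poly_Mapping.single (i, m) (coeff g i))"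
  unfolding weyl_of_poly_def weyl_pow_y weyl_sum_mult
  by (simp add: weyl_single_mult_single weyl_mono_mult_def)

lemma lookup_yterm: "Poly_Mapping.lookup (yterm g m) (i, j) = (if j = m then coeff g i else 0)"
  unfolding yterm_eq_sum by (auto simp: lookup_sum lookup_single when_def coeff_eq_0 not_le)

lemma weyl_single_eq_smult_xy:
  "Poly_Mapping.single (i, j) c = weyl_smult c (weyl_pow weyl_x i \<cdot>\<^sub>W weyl_pow weyl_y j)"
  by (simp add: weyl_pow_x weyl_of_poly_monom weyl_pow_y weyl_single_mult_single
      weyl_mono_mult_def weyl_smult_single)

lemma higher_pderiv_monom_binomial:
  "(pderiv ^^ l) (monom c k) = monom (of_nat ((k choose l) * fact l) * c) (k - l)"
proof (induction l)
  case (Suc l)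
  have "(of_nat ((k choose Suc l) * fact (Suc l)) :: 'a) = of_nat (k - l) * of_nat ((k choose l) * fact l)"
    by (metis choose_mult_fact_Suc mult.commute of_nat_mult)
  with Suc show ?case
    by (simp add: pderiv_monom mult_ac)
qed simp

lemma smult_sum_right: "smult c (\<Sum>i\<in>S. f i) = (\<Sum>i\<in>S. smult c (f i))"
  by (induction S rule: infinite_finite_induct) (simp_all add: smult_add_right)

lemma weyl_ypow_mult_poly:
  "weyl_pow weyl_y n \<cdot>\<^sub>W weyl_of_poly u
     = (\<Sum>l\<le>n. yterm (smult (of_nat (n choose l)) ((pderiv ^^ l) u)) (n - l))"
proof -
  have monom: "weyl_pow weyl_y n \<cdot>\<^sub>W weyl_of_poly (monom c k)
      = (\<Sum>l\<le>n. yterm (smult (of_nat (n choose l)) ((pderiv ^^ l) (monom c k))) (n - l))" for c k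
  proof -
    have "weyl_pow weyl_y n \<cdot>\<^sub>W weyl_of_poly (monom c k)
        = (\<Sum>l\<le>n. Poly_Mapping.single (k - l, n - l) (c * of_nat ((n choose l) * (k choose l) * fact l)))"
      by (simp add: weyl_pow_y weyl_of_poly_monom weyl_mono_mult_0_left[of n k 0 c, simplified]
          weyl_single_mult_single)
    then show ?thesis
      by (simp add: higher_pderiv_monom_binomial smult_monom weyl_of_poly_monom weyl_pow_y
          weyl_single_mult_single weyl_mono_mult_def mult_ac)
  qed
  have "weyl_pow weyl_y n \<cdot>\<^sub>W weyl_of_poly u
      = (\<Sum>i\<le>degree u. weyl_pow weyl_y n \<cdot>\<^sub>W weyl_of_poly (monom (coeff u i) i))"
    by (subst poly_as_sum_of_monoms[symmetric]) (simp add: weyl_of_poly_sum weyl_mult_sum)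
  also have "\<dots> = (\<Sum>l\<le>n. yterm (smult (of_nat (n choose l))
      ((pderiv ^^ l) (\<Sum>i\<le>degree u. monom (coeff u i) i))) (n - l))"
    by (simp add: monom sum.swap[of _ "{..degree u}"] higher_pderiv_sum smult_sum_right
        weyl_of_poly_sum weyl_sum_mult)
  finally show ?thesis
    by (simp add: poly_as_sum_of_monoms)
qed

lemma weyl_y_mult_poly:
  "weyl_y \<cdot>\<^sub>W weyl_of_poly u = weyl_of_poly u \<cdot>\<^sub>W weyl_y + weyl_of_poly (pderiv u)"
  using weyl_ypow_mult_poly[of 1 u] by (simp add: atMost_Suc)

lemma weyl_ypow_mult_x:
  "weyl_pow weyl_y n \<cdot>\<^sub>W weyl_x = weyl_x \<cdot>\<^sub>W weyl_pow weyl_y n + weyl_smult (of_nat n) (weyl_pow weyl_y (n - 1))"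
proof (cases n)
  case (Suc n')
  have "(pderiv ^^ l) [:0, 1::'a:] = 0" if "l \<ge> 2" for l
  proof -
    obtain l' where "l = Suc (Suc l')" using \<open>l \<ge> 2\<close> by (metis add_2_eq_Suc le_Suc_ex)
    then show ?thesis by (simp add: funpow_Suc_right pderiv_pCons del: funpow.simps)
  qed
  then have "(\<Sum>l\<le>n. yterm (smult (of_nat (n choose l)) ((pderiv ^^ l) [:0, 1::'a:])) (n - l))
      = (\<Sum>l\<in>{0, 1}. yterm (smult (of_nat (n choose l)) ((pderiv ^^ l) [:0, 1:])) (n - l))"
    using Suc by (intro sum.mono_neutral_right) auto
  also have "\<dots> = weyl_x \<cdot>\<^sub>W weyl_pow weyl_y n + weyl_smult (of_nat n) (weyl_pow weyl_y (n - 1))"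
    by (simp add: pderiv_pCons weyl_of_poly_x weyl_of_poly_const weyl_smult_mult_left)
  finally show ?thesis
    by (simp only: weyl_ypow_mult_poly[symmetric] weyl_of_poly_x)
qed simp

lemma weyl_commute_if_commute_x_y:
  assumes "u \<cdot>\<^sub>W weyl_x = weyl_x \<cdot>\<^sub>W u" "u \<cdot>\<^sub>W weyl_y = weyl_y \<cdot>\<^sub>W u"
  shows "u \<cdot>\<^sub>W a = a \<cdot>\<^sub>W u"
proof -
  have pow: "u \<cdot>\<^sub>W weyl_pow v i = weyl_pow v i \<cdot>\<^sub>W u" if "u \<cdot>\<^sub>W v = v \<cdot>\<^sub>W u" for v i
  proof (induction i)
    case (Suc i)
    have "u \<cdot>\<^sub>W weyl_pow v (Suc i) = v \<cdot>\<^sub>W (u \<cdot>\<^sub>W weyl_pow v i)"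
      by (simp only: weyl_pow.simps weyl_mult_assoc[symmetric] that)
    also have "\<dots> = weyl_pow v (Suc i) \<cdot>\<^sub>W u"
      by (simp only: Suc weyl_pow.simps weyl_mult_assoc)
    finally show ?case .
  qed simp
  have single: "u \<cdot>\<^sub>W Poly_Mapping.single k d = Poly_Mapping.single k d \<cdot>\<^sub>W u" for k d
  proof -
    obtain i j where k: "k = (i, j)" by force
    have "u \<cdot>\<^sub>W (weyl_pow weyl_x i \<cdot>\<^sub>W weyl_pow weyl_y j)
        = weyl_pow weyl_x i \<cdot>\<^sub>W (u \<cdot>\<^sub>W weyl_pow weyl_y j)"
      by (simp only: weyl_mult_assoc[symmetric] pow[OF assms(1)])
    also have "\<dots> = (weyl_pow weyl_x i \<cdot>\<^sub>W weyl_pow weyl_y j) \<cdot>\<^sub>W u"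
      by (simp only: weyl_mult_assoc pow[OF assms(2)])
    finally show ?thesis
      unfolding k weyl_single_eq_smult_xy weyl_smult_mult_left weyl_smult_mult_right by simp
  qed
  show ?thesis
    by (rule weyl_additive_eqI[where a = a]) (simp_all add: single weyl_mult_sum weyl_sum_mult)
qed

lemma yterm_mult_yterm:
  "yterm g m \<cdot>\<^sub>W yterm f n
     = (\<Sum>l\<le>m. yterm (g * smult (of_nat (m choose l)) ((pderiv ^^ l) f)) (m - l + n))"
proof -
  have merge: "weyl_of_poly g \<cdot>\<^sub>W (weyl_of_poly s \<cdot>\<^sub>W (weyl_pow weyl_y k \<cdot>\<^sub>W weyl_pow weyl_y n))
      = yterm (g * s) (k + n)" for s k
    by (simp only: weyl_of_poly_mult weyl_mult_assoc weyl_pow_add)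
  have "yterm g m \<cdot>\<^sub>W yterm f n
      = weyl_of_poly g \<cdot>\<^sub>W ((weyl_pow weyl_y m \<cdot>\<^sub>W weyl_of_poly f) \<cdot>\<^sub>W weyl_pow weyl_y n)"
    by (simp only: weyl_mult_assoc)
  also have "\<dots> = (\<Sum>l\<le>m. yterm (g * smult (of_nat (m choose l)) ((pderiv ^^ l) f)) (m - l + n))"
    by (simp only: weyl_ypow_mult_poly weyl_sum_mult weyl_mult_sum weyl_mult_assoc merge)
  finally show ?thesis .
qed

definition y_coeff :: "'a::field weyl \<Rightarrow> nat \<Rightarrow> 'a poly" where
  "y_coeff a m = (\<Sum>k\<in>Poly_Mapping.keys a.
     if snd k = m then monom (Poly_Mapping.lookup a k) (fst k) else 0)"

lemma coeff_y_coeff: "coeff (y_coeff a m) i = Poly_Mapping.lookup a (i, m)"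
proof -
  have "coeff (y_coeff a m) i = (\<Sum>k\<in>Poly_Mapping.keys a. if k = (i, m) then Poly_Mapping.lookup a k else 0)"
    unfolding y_coeff_def coeff_sum by (rule sum.cong) auto
  then show ?thesis
    by (auto simp: in_keys_iff)
qed

lemma y_coeff_add: "y_coeff (a + b) m = y_coeff a m + y_coeff b m"
  by (simp add: poly_eq_iff coeff_y_coeff lookup_add)

lemma y_coeff_diff: "y_coeff (a - b) m = y_coeff a m - y_coeff b m"
  by (simp add: poly_eq_iff coeff_y_coeff lookup_minus)

lemma y_coeff_0 [simp]: "y_coeff 0 m = 0"
  by (simp add: poly_eq_iff coeff_y_coeff)

lemma y_coeff_smult: "y_coeff (weyl_smult c a) m = smult c (y_coeff a m)"
  by (simp add: poly_eq_iff coeff_y_coeff)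

lemma y_coeff_sum: "y_coeff (\<Sum>i\<in>S. f i) m = (\<Sum>i\<in>S. y_coeff (f i) m)"
  by (induction S rule: infinite_finite_induct) (simp_all add: y_coeff_add)

lemma y_coeff_yterm: "y_coeff (yterm q k) m = (if m = k then q else 0)"
  by (simp add: poly_eq_iff coeff_y_coeff lookup_yterm)

lemma weyl_eq_0_if_y_coeff_eq_0: "(\<And>m. y_coeff a m = 0) \<Longrightarrow> a = 0"
  by (rule weyl_eqI) (metis coeff_y_coeff coeff_0 lookup_zero)

definition y_degree :: "'a::field weyl \<Rightarrow> nat" where
  "y_degree a = Max (insert 0 (snd ` Poly_Mapping.keys a))"

lemma y_coeff_eq_0_beyond_y_degree: "y_degree a < m \<Longrightarrow> y_coeff a m = 0"
proof -
  assume m: "y_degree a < m"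
  have "Poly_Mapping.lookup a (i, m) = 0" for i
  proof (rule ccontr)
    assume "Poly_Mapping.lookup a (i, m) \<noteq> 0"
    then have "m \<in> snd ` Poly_Mapping.keys a"
      by (force simp: in_keys_iff)
    then have "m \<le> y_degree a"
      unfolding y_degree_def by simp
    with m show False by simp
  qed
  then show ?thesis
    by (simp add: poly_eq_iff coeff_y_coeff)
qed

lemma weyl_normal_form:
  assumes "y_degree a \<le> N"
  shows "a = (\<Sum>m\<le>N. yterm (y_coeff a m) m)"
proof -
  have "y_coeff (a - (\<Sum>m\<le>N. yterm (y_coeff a m) m)) n = 0" for n
    using y_coeff_eq_0_beyond_y_degree[of a n] assms
    by (auto simp: y_coeff_diff y_coeff_sum y_coeff_yterm)
  then show ?thesis
    using weyl_eq_0_if_y_coeff_eq_0 by force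
qed

lemma weyl_comm_add: "weyl_comm u (a + b) = weyl_comm u a + weyl_comm u b"
  by (simp add: weyl_comm_def weyl_distrib_left weyl_distrib_right)

lemma weyl_comm_0 [simp]: "weyl_comm u 0 = 0"
  by (simp add: weyl_comm_def)

lemma weyl_comm_sum: "weyl_comm u (\<Sum>i\<in>S. f i) = (\<Sum>i\<in>S. weyl_comm u (f i))"
  by (induction S rule: infinite_finite_induct) (simp_all add: weyl_comm_add)

lemma weyl_comm_smult: "weyl_comm u (weyl_smult c a) = weyl_smult c (weyl_comm u a)"
  by (simp add: weyl_comm_def weyl_smult_mult_left weyl_smult_mult_right weyl_smult_diff)

lemma weyl_comm_mult_left:
  assumes "z \<cdot>\<^sub>W u = u \<cdot>\<^sub>W z"
  shows "weyl_comm u (z \<cdot>\<^sub>W b) = z \<cdot>\<^sub>W weyl_comm u b"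
proof -
  have "u \<cdot>\<^sub>W (z \<cdot>\<^sub>W b) = z \<cdot>\<^sub>W (u \<cdot>\<^sub>W b)"
    by (simp only: weyl_mult_assoc[symmetric] assms)
  then show ?thesis
    by (simp add: weyl_comm_def weyl_mult_diff weyl_mult_assoc)
qed

lemma weyl_comm_x_yterm:
  "weyl_comm weyl_x (yterm g n) = weyl_smult (- of_nat n) (yterm g (n - 1))"
proof -
  have "yterm g n \<cdot>\<^sub>W weyl_x
      = weyl_of_poly g \<cdot>\<^sub>W (weyl_x \<cdot>\<^sub>W weyl_pow weyl_y n + weyl_smult (of_nat n) (weyl_pow weyl_y (n - 1)))"
    by (simp only: weyl_mult_assoc weyl_ypow_mult_x)
  also have "\<dots> = weyl_x \<cdot>\<^sub>W yterm g n + weyl_smult (of_nat n) (yterm g (n - 1))"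
    by (simp only: weyl_distrib_left weyl_smult_mult_right weyl_of_poly_x[symmetric]
        weyl_of_poly_mult[symmetric] weyl_mult_assoc[symmetric] mult.commute)
  finally show ?thesis
    by (simp add: weyl_comm_def weyl_smult_minus_left)
qed

section \<open>The subalgebra \<open>A_h\<close>\<close>

lemma weyl_subalg_0: "0 \<in> weyl_subalg S"
  using weyl_subalg.smult[OF weyl_subalg.one, where c = 0] by simp

lemma weyl_subalg_diff: "a \<in> weyl_subalg S \<Longrightarrow> b \<in> weyl_subalg S \<Longrightarrow> a - b \<in> weyl_subalg S"
  using weyl_subalg.add[OF _ weyl_subalg.smult[where c = "- 1"]]
  by (simp add: weyl_smult_minus_left)

lemma weyl_subalg_sum: "(\<And>i. i \<in> I \<Longrightarrow> f i \<in> weyl_subalg S) \<Longrightarrow> (\<Sum>i\<in>I. f i) \<in> weyl_subalg S"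
  by (induction I rule: infinite_finite_induct) (auto intro: weyl_subalg_0 weyl_subalg.add)

lemma A_h_x: "weyl_x \<in> A_h h"
  and A_h_yhat: "yhat h \<in> A_h h"
  and A_h_0: "0 \<in> A_h h"
  and A_h_one: "weyl_one \<in> A_h h"
  by (simp_all add: A_h_def weyl_subalg.gen weyl_subalg.one weyl_subalg_0)

lemma A_h_add: "a \<in> A_h h \<Longrightarrow> b \<in> A_h h \<Longrightarrow> a + b \<in> A_h h"
  and A_h_diff: "a \<in> A_h h \<Longrightarrow> b \<in> A_h h \<Longrightarrow> a - b \<in> A_h h"
  and A_h_mult: "a \<in> A_h h \<Longrightarrow> b \<in> A_h h \<Longrightarrow> a \<cdot>\<^sub>W b \<in> A_h h"
  and A_h_smult: "a \<in> A_h h \<Longrightarrow> weyl_smult c a \<in> A_h h"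
  and A_h_sum: "(\<And>i. i \<in> I \<Longrightarrow> f i \<in> A_h h) \<Longrightarrow> (\<Sum>i\<in>I. f i) \<in> A_h h"
  unfolding A_h_def
  by (simp_all add: weyl_subalg.add weyl_subalg_diff weyl_subalg.mult weyl_subalg.smult weyl_subalg_sum)

lemma A_h_poly: "weyl_of_poly f \<in> A_h h"
  by (induction f) (simp_all add: A_h_0 weyl_of_poly_pCons A_h_add A_h_smult A_h_one A_h_mult A_h_x)

lemma yhat_mult_yterm:
  "yhat h \<cdot>\<^sub>W yterm g j = yterm (h * g) (Suc j) + yterm (pderiv (h * g)) j"
proof -
  have "yhat h \<cdot>\<^sub>W yterm g j = (weyl_y \<cdot>\<^sub>W weyl_of_poly (h * g)) \<cdot>\<^sub>W weyl_pow weyl_y j"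
    by (simp only: yhat_def weyl_of_poly_mult weyl_mult_assoc)
  then show ?thesis
    by (simp only: weyl_y_mult_poly weyl_distrib_right weyl_mult_assoc weyl_pow.simps)
qed

lemma yterm_mult_yhat:
  "yterm g j \<cdot>\<^sub>W yhat h
     = (\<Sum>l\<le>Suc j. yterm (g * smult (of_nat (Suc j choose l)) ((pderiv ^^ l) h)) (Suc j - l))"
proof -
  have "yterm g j \<cdot>\<^sub>W yhat h = weyl_of_poly g \<cdot>\<^sub>W (weyl_pow weyl_y (Suc j) \<cdot>\<^sub>W weyl_of_poly h)"
    by (simp only: yhat_def weyl_mult_assoc[symmetric]) (simp only: weyl_mult_assoc weyl_pow_Suc_right)
  then show ?thesis
    by (simp only: weyl_ypow_mult_poly weyl_mult_sum weyl_mult_assoc[symmetric] weyl_of_poly_mult)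
qed

lemma yterm_power_in_A_h: "yterm (h ^ j) j \<in> A_h h"
proof (induction j)
  case 0
  then show ?case by (simp add: weyl_of_poly_1 A_h_one)
next
  case (Suc j)
  have "yterm (h ^ Suc j) (Suc j) = yhat h \<cdot>\<^sub>W yterm (h ^ j) j - yterm (pderiv (h ^ Suc j)) j"
    by (simp add: yhat_mult_yterm)
  also have "yterm (pderiv (h ^ Suc j)) j
      = weyl_smult (of_nat (Suc j)) (weyl_of_poly (pderiv h) \<cdot>\<^sub>W yterm (h ^ j) j)"
    by (simp add: pderiv_power_Suc weyl_of_poly_smult weyl_of_poly_mult weyl_smult_mult_left
        weyl_mult_assoc mult.commute del: power_Suc)
  finally show ?case
    by (simp only: A_h_diff A_h_mult A_h_smult A_h_yhat A_h_poly Suc)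
qed

lemma yterm_in_A_h:
  assumes "h ^ m dvd g"
  shows "yterm g m \<in> A_h h"
proof -
  from assms obtain g' where "g = g' * h ^ m"
    by (metis dvdE mult.commute)
  then have "yterm g m = weyl_of_poly g' \<cdot>\<^sub>W yterm (h ^ m) m"
    by (simp only: weyl_of_poly_mult weyl_mult_assoc)
  then show ?thesis
    by (simp add: A_h_mult A_h_poly yterm_power_in_A_h)
qed

lemma power_dvd_pderiv:
  fixes h u :: "'a::field poly"
  assumes "h ^ n dvd u"
  shows "h ^ (n - 1) dvd pderiv u"
proof (cases n)
  case (Suc k)
  from assms obtain v where u: "u = h ^ n * v"
    by (elim dvdE)
  have "pderiv u = h ^ k * (h * pderiv v + v * smult (of_nat (Suc k)) (pderiv h))"
    unfolding u Suc pderiv_mult pderiv_power_Suc by (simp add: algebra_simps)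
  with Suc show ?thesis
    by simp
qed simp

lemma power_dvd_higher_pderiv:
  fixes h u :: "'a::field poly"
  assumes "h ^ n dvd u"
  shows "h ^ (n - l) dvd (pderiv ^^ l) u"
proof (induction l)
  case (Suc l)
  then show ?case
    using power_dvd_pderiv[OF Suc] by simp
qed (use assms in simp)

lemma power_dvd_y_coeff_yterm_mult_yterm:
  fixes h :: "'a::field poly"
  assumes "h ^ m dvd g" "h ^ n dvd f"
  shows "h ^ k dvd y_coeff (yterm g m \<cdot>\<^sub>W yterm f n) k"
proof -
  have "h ^ (m - l + n) dvd g * smult (of_nat (m choose l)) ((pderiv ^^ l) f)" if "l \<le> m" for l
  proof (cases "l \<le> n")
    case True
    have "h ^ (n - l) dvd smult (of_nat (m choose l)) ((pderiv ^^ l) f)"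
      by (rule dvd_smult, rule power_dvd_higher_pderiv[OF assms(2)])
    with assms(1) have "h ^ m * h ^ (n - l) dvd g * smult (of_nat (m choose l)) ((pderiv ^^ l) f)"
      by (rule mult_dvd_mono)
    moreover have "m + (n - l) = m - l + n"
      using True that by simp
    ultimately show ?thesis
      by (metis power_add)
  next
    case False
    then have "h ^ (m - l + n) dvd h ^ m"
      using that by (intro le_imp_power_dvd) simp
    then show ?thesis
      using dvd_trans assms(1) dvd_mult2 by blast
  qed
  then show ?thesis
    unfolding yterm_mult_yterm y_coeff_sum y_coeff_yterm by (intro dvd_sum) auto
qed

lemma power_dvd_y_coeff_mult:
  fixes h :: "'a::field poly"
  assumes "\<forall>m. h ^ m dvd y_coeff a m" "\<forall>m. h ^ m dvd y_coeff b m"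
  shows "h ^ k dvd y_coeff (a \<cdot>\<^sub>W b) k"
proof -
  have "a \<cdot>\<^sub>W b = (\<Sum>m\<le>y_degree a. yterm (y_coeff a m) m) \<cdot>\<^sub>W (\<Sum>n\<le>y_degree b. yterm (y_coeff b n) n)"
    using weyl_normal_form[of a "y_degree a"] weyl_normal_form[of b "y_degree b"] by simp
  then show ?thesis
    using assms
    by (simp add: weyl_sum_mult weyl_mult_sum y_coeff_sum dvd_sum power_dvd_y_coeff_yterm_mult_yterm)
qed

lemma A_h_eq: "A_h h = {a. \<forall>m. h ^ m dvd y_coeff a m}"
proof (intro equalityI subsetI CollectI)
  fix a assume "a \<in> A_h h"
  then show "\<forall>m. h ^ m dvd y_coeff a m"
    unfolding A_h_def
  proof (induction rule: weyl_subalg.induct)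
    case (gen s)
    have "weyl_x = yterm [:0, 1:] 0" "yhat h = yterm h 1 + yterm (pderiv h) 0"
      by (simp_all add: weyl_of_poly_x yhat_def weyl_y_mult_poly)
    with gen consider "s = yterm [:0, 1:] 0" | "s = yterm h 1 + yterm (pderiv h) 0"
      by blast
    then show ?case
      by cases (simp_all add: y_coeff_add y_coeff_yterm del: weyl_pow.simps)
  next
    case one
    have "y_coeff (weyl_one :: 'a weyl) m = (if m = 0 then 1 else 0)" for m
      using y_coeff_yterm[of 1 0 m] by (simp add: weyl_of_poly_1)
    then show ?case
      by simp
  qed (simp_all add: y_coeff_add y_coeff_smult dvd_smult power_dvd_y_coeff_mult)
next
  fix a assume "a \<in> {a. \<forall>m. h ^ m dvd y_coeff a m}"
  then have "yterm (y_coeff a m) m \<in> A_h h" for m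
    by (simp add: yterm_in_A_h)
  then show "a \<in> A_h h"
    by (subst weyl_normal_form[OF order_refl]) (simp add: A_h_sum)
qed

section \<open>Characteristic \<open>p\<close>\<close>

lemma pderiv_power_eq_0_if_char_dvd:
  fixes h :: "'a::field poly"
  assumes "CHAR('a) dvd n"
  shows "pderiv (h ^ n) = 0"
  using assms by (simp add: pderiv_power of_nat_eq_0_iff_char_dvd[symmetric])

lemma char_dvd_if_pderiv_eq_0:
  fixes c :: "'a::field poly"
  assumes "pderiv c = 0" "coeff c t \<noteq> 0"
  shows "CHAR('a) dvd t"
proof (cases t)
  case (Suc t')
  have "of_nat (Suc t') * coeff c (Suc t') = 0"
    using assms(1) coeff_pderiv[of c t'] by simp
  with Suc assms(2) show ?thesis
    by (simp add: of_nat_eq_0_iff_char_dvd[symmetric])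
qed simp

lemma weyl_ypow_commute:
  assumes "CHAR('a::field) dvd n"
  shows "weyl_pow weyl_y n \<cdot>\<^sub>W a = a \<cdot>\<^sub>W (weyl_pow weyl_y n :: 'a weyl)"
proof (rule weyl_commute_if_commute_x_y)
  show "weyl_pow weyl_y n \<cdot>\<^sub>W weyl_x = weyl_x \<cdot>\<^sub>W (weyl_pow weyl_y n :: 'a weyl)"
    using assms by (simp add: weyl_ypow_mult_x of_nat_eq_0_iff_char_dvd[symmetric])
  show "weyl_pow weyl_y n \<cdot>\<^sub>W weyl_y = weyl_y \<cdot>\<^sub>W (weyl_pow weyl_y n :: 'a weyl)"
    by (simp only: weyl_pow_Suc_right[symmetric] weyl_pow.simps(2)[symmetric])
qed

lemma weyl_of_poly_commute:
  assumes "pderiv c = 0"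
  shows "weyl_of_poly c \<cdot>\<^sub>W a = a \<cdot>\<^sub>W weyl_of_poly c"
proof (rule weyl_commute_if_commute_x_y)
  show "weyl_of_poly c \<cdot>\<^sub>W weyl_x = weyl_x \<cdot>\<^sub>W weyl_of_poly c"
    by (simp add: weyl_of_poly_x[symmetric] weyl_of_poly_mult[symmetric] mult.commute)
  show "weyl_of_poly c \<cdot>\<^sub>W weyl_y = weyl_y \<cdot>\<^sub>W weyl_of_poly c"
    by (simp add: weyl_y_mult_poly assms)
qed

lemma y_coeff_comm_x:
  "y_coeff (weyl_comm weyl_x a) k = smult (- of_nat (Suc k)) (y_coeff a (Suc k))"
proof -
  let ?N = "y_degree a + Suc k"
  have "y_coeff (weyl_comm weyl_x a) k = y_coeff (weyl_comm weyl_x (\<Sum>m\<le>?N. yterm (y_coeff a m) m)) k"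
    by (rule arg_cong[where f = "\<lambda>b. y_coeff (weyl_comm weyl_x b) k"], rule weyl_normal_form) simp
  also have "\<dots> = (\<Sum>m\<le>?N. smult (- of_nat m) (if k = m - 1 then y_coeff a m else 0))"
    by (simp only: weyl_comm_sum weyl_comm_x_yterm y_coeff_sum y_coeff_smult y_coeff_yterm)
  also have "\<dots> = (\<Sum>m\<le>?N. if m = Suc k then smult (- of_nat m) (y_coeff a m) else 0)"
  proof (rule sum.cong[OF refl])
    fix m
    show "smult (- of_nat m) (if k = m - 1 then y_coeff a m else 0)
        = (if m = Suc k then smult (- of_nat m) (y_coeff a m) else 0)"
      by (cases m) auto
  qed
  also have "\<dots> = smult (- of_nat (Suc k)) (y_coeff a (Suc k))"
    by (simp only: sum.delta[OF finite_atMost]) simp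
  finally show ?thesis .
qed

lemma char_dvd_if_commute_x:
  fixes z :: "'a::field weyl"
  assumes "z \<cdot>\<^sub>W weyl_x = weyl_x \<cdot>\<^sub>W z" "y_coeff z m \<noteq> 0"
  shows "CHAR('a) dvd m"
proof (cases m)
  case (Suc k)
  have "smult (- of_nat (Suc k)) (y_coeff z (Suc k)) = 0"
    using assms(1) y_coeff_comm_x[of z k] by (simp add: weyl_comm_def)
  then have "(of_nat (Suc k) :: 'a) = 0"
    using Suc assms(2) by (simp del: of_nat_Suc)
  with Suc show ?thesis
    by (simp only: of_nat_eq_0_iff_char_dvd)
qed simp

lemma weyl_comm_yhat_yterm:
  fixes g h :: "'a::field poly"
  assumes "CHAR('a) dvd m"
  shows "weyl_comm (yhat h) (yterm g m) = yterm (h * pderiv g) m"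
proof -
  have "yterm g m \<cdot>\<^sub>W yhat h = weyl_of_poly g \<cdot>\<^sub>W ((weyl_y \<cdot>\<^sub>W weyl_of_poly h) \<cdot>\<^sub>W weyl_pow weyl_y m)"
    using weyl_ypow_commute[OF assms, of "yhat h"] by (simp add: yhat_def weyl_mult_assoc)
  also have "\<dots> = yterm (h * g) (Suc m) + yterm (g * pderiv h) m"
    by (simp add: weyl_y_mult_poly weyl_distrib_right weyl_distrib_left weyl_mult_assoc
        weyl_of_poly_mult mult.commute)
  finally have "yterm g m \<cdot>\<^sub>W yhat h = yterm (h * g) (Suc m) + yterm (g * pderiv h) m" .
  moreover have "pderiv (h * g) - g * pderiv h = h * pderiv g"
    by (simp add: pderiv_mult algebra_simps)
  ultimately show ?thesis
    by (simp add: weyl_comm_def yhat_mult_yterm weyl_of_poly_diff[symmetric]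
        weyl_diff_mult[symmetric])
qed

text \<open>In characteristic \<open>p\<close> this is \<open>F[x\<^sup>p, y\<^sup>p]\<close>, the centre of \<open>A\<^sub>1\<close>.\<close>

definition weyl_pcenter :: "'a::field weyl set" where
  "weyl_pcenter = {z. \<forall>m. y_coeff z m \<noteq> 0 \<longrightarrow> CHAR('a) dvd m \<and> pderiv (y_coeff z m) = 0}"

lemma weyl_center_A_h_subset_pcenter:
  fixes h :: "'a::field poly"
  assumes "h \<noteq> 0"
  shows "weyl_center (A_h h) \<subseteq> weyl_pcenter"
proof
  fix z assume "z \<in> weyl_center (A_h h)"
  then have commute: "z \<cdot>\<^sub>W a = a \<cdot>\<^sub>W z" if "a \<in> A_h h" for a
    using that unfolding weyl_center_def by auto
  have dvd: "CHAR('a) dvd m" if "y_coeff z m \<noteq> 0" for m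
    using char_dvd_if_commute_x[OF commute[OF A_h_x] that] .
  let ?N = "y_degree z"
  have "0 = weyl_comm (yhat h) (\<Sum>m\<le>?N. yterm (y_coeff z m) m)"
    using commute[OF A_h_yhat] weyl_normal_form[of z ?N] by (simp add: weyl_comm_def)
  also have "\<dots> = (\<Sum>m\<le>?N. yterm (h * pderiv (y_coeff z m)) m)"
    unfolding weyl_comm_sum
  proof (rule sum.cong[OF refl])
    fix m
    show "weyl_comm (yhat h) (yterm (y_coeff z m) m) = yterm (h * pderiv (y_coeff z m)) m"
      using dvd[of m] weyl_comm_yhat_yterm[of m h "y_coeff z m"] by (cases "y_coeff z m = 0") simp_all
  qed
  finally have sum_eq_0: "(\<Sum>m\<le>?N. yterm (h * pderiv (y_coeff z m)) m) = 0"
    by simp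
  have "pderiv (y_coeff z m) = 0" for m
  proof (cases "m \<le> ?N")
    case True
    then have "h * pderiv (y_coeff z m) = y_coeff (\<Sum>m\<le>?N. yterm (h * pderiv (y_coeff z m)) m) m"
      by (simp add: y_coeff_sum y_coeff_yterm)
    with sum_eq_0 assms show ?thesis
      by simp
  qed (simp add: y_coeff_eq_0_beyond_y_degree)
  with dvd show "z \<in> weyl_pcenter"
    unfolding weyl_pcenter_def by blast
qed

subsection \<open>Splitting polynomials over \<open>F[x\<^sup>p]\<close>\<close>

definition xp_component :: "'a::field poly \<Rightarrow> nat \<Rightarrow> 'a poly" where
  "xp_component g i = (\<Sum>k\<le>degree g. monom (coeff g (CHAR('a) * k + i)) (CHAR('a) * k))"

lemma coeff_xp_component:
  fixes g :: "'a::field poly"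
  assumes "CHAR('a) > 0"
  shows "coeff (xp_component g i) t = (if CHAR('a) dvd t then coeff g (t + i) else 0)"
proof -
  let ?p = "CHAR('a)"
  have "coeff (xp_component g i) t = (\<Sum>k\<le>degree g. if ?p * k = t then coeff g (t + i) else 0)"
    unfolding xp_component_def coeff_sum by (intro sum.cong refl) (auto simp: coeff_monom)
  also have "\<dots> = (if ?p dvd t \<and> t div ?p \<le> degree g then coeff g (t + i) else 0)"
  proof (cases "?p dvd t")
    case True
    then have "?p * k = t \<longleftrightarrow> k = t div ?p" for k
      using assms by auto
    with True show ?thesis
      by (simp add: sum.delta')
  qed (auto intro!: sum.neutral)
  also have "\<dots> = (if ?p dvd t then coeff g (t + i) else 0)"
  proof -
    have "coeff g (t + i) = 0" if "\<not> t div ?p \<le> degree g"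
      using that div_le_dividend[of t ?p] by (intro coeff_eq_0) linarith
    then show ?thesis
      by auto
  qed
  finally show ?thesis .
qed

lemma pderiv_xp_component:
  fixes g :: "'a::field poly"
  assumes "CHAR('a) > 0"
  shows "pderiv (xp_component g i) = 0"
proof -
  have "of_nat (Suc n) * coeff (xp_component g i) (Suc n) = (0::'a)" for n
    by (cases "CHAR('a) dvd Suc n")
      (simp_all add: coeff_xp_component[OF assms] of_nat_eq_0_iff_char_dvd[symmetric] del: of_nat_Suc)
  then show ?thesis
    by (simp add: poly_eq_iff coeff_pderiv del: of_nat_Suc)
qed

lemma eq_mod_if_dvd_diff: "(i::nat) < p \<Longrightarrow> i \<le> n \<Longrightarrow> p dvd (n - i) \<Longrightarrow> i = n mod p"
  using mod_nat_eqI by presburger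

lemma poly_eq_sum_xp_components:
  fixes g :: "'a::field poly"
  assumes "CHAR('a) > 0"
  shows "g = (\<Sum>i<CHAR('a). monom 1 i * xp_component g i)"
proof -
  let ?p = "CHAR('a)"
  have "coeff (\<Sum>i<?p. monom 1 i * xp_component g i) n = coeff g n" for n
  proof -
    have "coeff (\<Sum>i<?p. monom 1 i * xp_component g i) n
        = (\<Sum>i<?p. if i = n mod ?p then coeff g n else 0)"
      unfolding coeff_sum
    proof (intro sum.cong refl)
      fix i assume "i \<in> {..<?p}"
      then have "(i \<le> n \<and> ?p dvd (n - i)) \<longleftrightarrow> i = n mod ?p"
        using eq_mod_if_dvd_diff[of i ?p n] by (auto simp: minus_mod_eq_mult_div[symmetric])
      then show "coeff (monom 1 i * xp_component g i) n = (if i = n mod ?p then coeff g n else 0)"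
        by (auto simp: coeff_monom_mult coeff_xp_component[OF assms])
    qed
    also have "\<dots> = coeff g n"
      using assms by simp
    finally show ?thesis .
  qed
  then show ?thesis
    by (simp add: poly_eq_iff)
qed

lemma xp_components_unique:
  fixes c :: "nat \<Rightarrow> 'a::field poly"
  assumes "CHAR('a) > 0"
    and pderiv_c: "\<And>i. i < CHAR('a) \<Longrightarrow> pderiv (c i) = 0"
    and sum_eq_0: "(\<Sum>i<CHAR('a). monom 1 i * c i) = 0"
    and "i0 < CHAR('a)"
  shows "c i0 = 0"
proof -
  let ?p = "CHAR('a)"
  have "coeff (c i0) t = 0" if "?p dvd t" for t
  proof -
    have "coeff (c i) (t + i0 - i) = 0" if "i < ?p" "i \<noteq> i0" "i \<le> t + i0" for i
    proof (rule ccontr)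
      assume "coeff (c i) (t + i0 - i) \<noteq> 0"
      then have "?p dvd (t + i0 - i)"
        using char_dvd_if_pderiv_eq_0[OF pderiv_c[OF \<open>i < ?p\<close>]] by blast
      then have "i = (t + i0) mod ?p"
        using eq_mod_if_dvd_diff that by blast
      moreover have "i0 = (t + i0) mod ?p"
        using eq_mod_if_dvd_diff[OF \<open>i0 < ?p\<close>, of "t + i0"] \<open>?p dvd t\<close> by simp
      ultimately show False
        using \<open>i \<noteq> i0\<close> by simp
    qed
    then have "coeff (\<Sum>i<?p. monom 1 i * c i) (t + i0) = (\<Sum>i<?p. if i = i0 then coeff (c i0) t else 0)"
      unfolding coeff_sum by (intro sum.cong refl) (auto simp: coeff_monom_mult)
    also have "\<dots> = coeff (c i0) t"
      using \<open>i0 < ?p\<close> by simp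
    finally have "coeff (\<Sum>i<?p. monom 1 i * c i) (t + i0) = coeff (c i0) t" .
    with sum_eq_0 show ?thesis
      by simp
  qed
  then show ?thesis
    using char_dvd_if_pderiv_eq_0[OF pderiv_c[OF \<open>i0 < ?p\<close>]] by (metis poly_eqI coeff_0)
qed

section \<open>\<open>A_h\<close> as a module over its centre\<close>

lemma weyl_center_A_h_commute: "z \<in> weyl_center (A_h h) \<Longrightarrow> a \<in> A_h h \<Longrightarrow> z \<cdot>\<^sub>W a = a \<cdot>\<^sub>W z"
  and weyl_center_A_h_mem: "z \<in> weyl_center (A_h h) \<Longrightarrow> z \<in> A_h h"
  unfolding weyl_center_def by blast+

lemma weyl_center_A_h_0: "0 \<in> weyl_center (A_h h)"
  by (simp add: weyl_center_def A_h_0)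

lemma weyl_center_A_h_add:
  "a \<in> weyl_center (A_h h) \<Longrightarrow> b \<in> weyl_center (A_h h) \<Longrightarrow> a + b \<in> weyl_center (A_h h)"
  by (simp add: weyl_center_def A_h_add weyl_distrib_left weyl_distrib_right)

lemma weyl_center_A_h_smult: "a \<in> weyl_center (A_h h) \<Longrightarrow> weyl_smult c a \<in> weyl_center (A_h h)"
  by (simp add: weyl_center_def A_h_smult weyl_smult_mult_left weyl_smult_mult_right)

lemma weyl_center_A_h_uminus: "a \<in> weyl_center (A_h h) \<Longrightarrow> - a \<in> weyl_center (A_h h)"
  using weyl_center_A_h_smult[of a h "- 1"] by (simp add: weyl_smult_minus_left)

lemma weyl_center_A_h_sum:
  "(\<And>i. i \<in> I \<Longrightarrow> f i \<in> weyl_center (A_h h)) \<Longrightarrow> (\<Sum>i\<in>I. f i) \<in> weyl_center (A_h h)"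
  by (induction I rule: infinite_finite_induct) (simp_all add: weyl_center_A_h_0 weyl_center_A_h_add)

definition A_h_basis :: "'a::field poly \<Rightarrow> nat \<times> nat \<Rightarrow> 'a weyl" where
  "A_h_basis h = (\<lambda>(i, j). weyl_pow weyl_x i \<cdot>\<^sub>W weyl_of_poly (h ^ j) \<cdot>\<^sub>W weyl_pow weyl_y j)"

lemma A_h_basis_eq_yterm: "A_h_basis h (i, j) = yterm (monom 1 i * h ^ j) j"
  by (simp add: A_h_basis_def weyl_pow_x weyl_of_poly_mult)

lemma A_h_basis_in_A_h: "A_h_basis h ij \<in> A_h h"
  by (cases ij) (simp add: A_h_basis_eq_yterm yterm_in_A_h)

lemma central_yterm_in_weyl_center:
  fixes h c :: "'a::field poly"
  assumes "CHAR('a) dvd P" "pderiv c = 0"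
  shows "yterm (c * h ^ P) P \<in> weyl_center (A_h h)"
proof -
  have "yterm (c * h ^ P) P \<in> A_h h"
    by (simp add: yterm_in_A_h)
  moreover have "pderiv (c * h ^ P) = 0"
    using assms(2) pderiv_power_eq_0_if_char_dvd[OF assms(1), of h] by (simp add: pderiv_mult)
  then have "yterm (c * h ^ P) P \<cdot>\<^sub>W a = a \<cdot>\<^sub>W yterm (c * h ^ P) P" for a
    using weyl_ypow_commute[OF assms(1), of a] weyl_of_poly_commute[of "c * h ^ P" a]
    by (simp add: weyl_mult_assoc) (simp add: weyl_mult_assoc[symmetric])
  ultimately show ?thesis
    unfolding weyl_center_def by blast
qed

text \<open>Write \<open>m = P + (m mod p)\<close> and move the central factor \<open>y\<^sup>P\<close> to the left.\<close>

lemma yterm_eq_central_mult_A_h_basis: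
  fixes h c :: "'a::field poly" and m :: nat
  defines "P \<equiv> CHAR('a) * (m div CHAR('a))"
  shows "yterm (monom 1 i * c * h ^ m) m = yterm (c * h ^ P) P \<cdot>\<^sub>W A_h_basis h (i, m mod CHAR('a))"
proof -
  let ?j = "m mod CHAR('a)"
  have m: "m = P + ?j" and dvd: "CHAR('a) dvd P"
    unfolding P_def by simp_all
  have "yterm (c * h ^ P) P \<cdot>\<^sub>W A_h_basis h (i, ?j)
      = weyl_of_poly (c * h ^ P) \<cdot>\<^sub>W (weyl_pow weyl_y P \<cdot>\<^sub>W weyl_of_poly (monom 1 i * h ^ ?j)) \<cdot>\<^sub>W weyl_pow weyl_y ?j"
    by (simp add: A_h_basis_eq_yterm weyl_mult_assoc)
  also have "\<dots> = weyl_of_poly (c * h ^ P) \<cdot>\<^sub>W (weyl_of_poly (monom 1 i * h ^ ?j) \<cdot>\<^sub>W weyl_pow weyl_y P)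
      \<cdot>\<^sub>W weyl_pow weyl_y ?j"
    by (simp only: weyl_ypow_commute[OF dvd])
  also have "\<dots> = weyl_of_poly (c * h ^ P * (monom 1 i * h ^ ?j)) \<cdot>\<^sub>W weyl_pow weyl_y (P + ?j)"
    by (simp only: weyl_of_poly_mult weyl_mult_assoc weyl_pow_add)
  also have "c * h ^ P * (monom 1 i * h ^ ?j) = monom 1 i * c * h ^ m"
    by (subst m) (simp add: power_add algebra_simps)
  finally show ?thesis
    using m by simp
qed

lemma A_h_decomposition:
  fixes h :: "'a::field poly"
  assumes "CHAR('a) > 0" "a \<in> A_h h"
  shows "\<exists>z. (\<forall>ij. z ij \<in> weyl_center (A_h h))
           \<and> a = (\<Sum>ij\<in>{..<CHAR('a)} \<times> {..<CHAR('a)}. z ij \<cdot>\<^sub>W A_h_basis h ij)"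
proof -
  let ?p = "CHAR('a)"
  let ?N = "y_degree a"
  define g where "g m = y_coeff a m div h ^ m" for m
  have y_coeff_a: "y_coeff a m = g m * h ^ m" for m
    using assms(2) unfolding A_h_eq g_def by (simp add: dvd_div_mult_self)
  define t where "t m i = yterm (xp_component (g m) i * h ^ (?p * (m div ?p))) (?p * (m div ?p))" for m i
  have t_center: "t m i \<in> weyl_center (A_h h)" for m i
    unfolding t_def by (rule central_yterm_in_weyl_center) (simp_all add: pderiv_xp_component assms(1))
  have yterm_a: "yterm (y_coeff a m) m = (\<Sum>i<?p. t m i \<cdot>\<^sub>W A_h_basis h (i, m mod ?p))" for m
  proof -
    have "yterm (y_coeff a m) m = (\<Sum>i<?p. yterm (monom 1 i * xp_component (g m) i * h ^ m) m)"
      by (subst y_coeff_a, subst poly_eq_sum_xp_components[OF assms(1), of "g m"])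
        (simp add: sum_distrib_right weyl_of_poly_sum weyl_sum_mult)
    then show ?thesis
      by (simp add: t_def yterm_eq_central_mult_A_h_basis)
  qed
  define z where "z ij = (\<Sum>m\<in>{m \<in> {..?N}. m mod ?p = snd ij}. t m (fst ij))" for ij
  have "a = (\<Sum>m\<le>?N. \<Sum>i<?p. t m i \<cdot>\<^sub>W A_h_basis h (i, m mod ?p))"
    by (subst weyl_normal_form[OF order_refl]) (simp add: yterm_a)
  also have "\<dots> = (\<Sum>i<?p. \<Sum>j<?p. \<Sum>m\<in>{m \<in> {..?N}. m mod ?p = j}. t m i \<cdot>\<^sub>W A_h_basis h (i, m mod ?p))"
    using assms(1) by (subst sum.swap) (intro sum.cong refl sum.group[symmetric]; auto)
  also have "\<dots> = (\<Sum>ij\<in>{..<?p} \<times> {..<?p}. z ij \<cdot>\<^sub>W A_h_basis h ij)"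
    by (simp add: sum.cartesian_product z_def weyl_sum_mult case_prod_beta)
  finally have "a = (\<Sum>ij\<in>{..<?p} \<times> {..<?p}. z ij \<cdot>\<^sub>W A_h_basis h ij)" .
  moreover have "z ij \<in> weyl_center (A_h h)" for ij
    unfolding z_def by (rule weyl_center_A_h_sum) (rule t_center)
  ultimately show ?thesis
    by blast
qed

lemma weyl_pcenterD:
  assumes "z \<in> weyl_pcenter"
  shows weyl_pcenter_char_dvd: "y_coeff z m \<noteq> 0 \<Longrightarrow> CHAR('a::field) dvd m"
    and weyl_pcenter_pderiv: "pderiv (y_coeff z m) = (0 :: 'a poly)"
  using assms unfolding weyl_pcenter_def by (cases "y_coeff z m = 0"; auto)+

lemma y_coeff_pcenter_mult_yterm:
  fixes q :: "'a::field poly"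
  assumes z: "z \<in> weyl_pcenter"
  shows "y_coeff (z \<cdot>\<^sub>W yterm q j) s = (if j \<le> s then y_coeff z (s - j) * q else 0)"
proof -
  let ?N = "y_degree z"
  have "yterm (y_coeff z m) m \<cdot>\<^sub>W yterm q j = yterm (y_coeff z m * q) (m + j)" for m
  proof (cases "y_coeff z m = 0")
    case False
    have "yterm (y_coeff z m) m \<cdot>\<^sub>W yterm q j
        = weyl_of_poly (y_coeff z m) \<cdot>\<^sub>W (weyl_pow weyl_y m \<cdot>\<^sub>W weyl_of_poly q) \<cdot>\<^sub>W weyl_pow weyl_y j"
      by (simp only: weyl_mult_assoc)
    also have "\<dots> = yterm (y_coeff z m * q) (m + j)"
      by (simp only: weyl_ypow_commute[OF weyl_pcenter_char_dvd[OF z False]] weyl_mult_assoc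
          weyl_of_poly_mult weyl_pow_add)
    finally show ?thesis .
  qed simp
  then have "y_coeff (z \<cdot>\<^sub>W yterm q j) s = (\<Sum>m\<le>?N. if s = m + j then y_coeff z m * q else 0)"
    by (subst weyl_normal_form[OF order_refl])
      (simp add: weyl_sum_mult y_coeff_sum y_coeff_yterm)
  also have "\<dots> = (\<Sum>m\<le>?N. if m = s - j \<and> j \<le> s then y_coeff z m * q else 0)"
    by (intro sum.cong) auto
  also have "\<dots> = (if j \<le> s then y_coeff z (s - j) * q else 0)"
    using y_coeff_eq_0_beyond_y_degree[of z "s - j"] by (auto simp: sum.delta)
  finally show ?thesis .
qed

lemma y_coeff_pcenter_off_residue:
  fixes z :: "'a::field weyl"
  assumes "z \<in> weyl_pcenter" "j < CHAR('a)" "j \<le> s" "j \<noteq> s mod CHAR('a)"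
  shows "y_coeff z (s - j) = 0"
proof (rule ccontr)
  assume "y_coeff z (s - j) \<noteq> 0"
  then have "CHAR('a) dvd (s - j)"
    by (rule weyl_pcenter_char_dvd[OF assms(1)])
  with assms(2-4) show False
    using eq_mod_if_dvd_diff by blast
qed

text \<open>The \<open>y\<^sup>s\<close>-coefficient of such a combination only involves the indices \<open>(i, s mod p)\<close>,
  and there the \<open>x\<^sup>i\<close> are independent over \<open>F[x\<^sup>p]\<close>.\<close>

lemma pcenter_combination_y_coeff_eq_0:
  fixes f :: "nat \<Rightarrow> 'a::field poly"
  defines "J \<equiv> {..<CHAR('a)} \<times> {..<CHAR('a)}"
  assumes p: "CHAR('a) > 0"
    and f: "\<And>j. j < CHAR('a) \<Longrightarrow> f j \<noteq> 0"
    and z: "\<And>ij. ij \<in> J \<Longrightarrow> z ij \<in> weyl_pcenter"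
    and sum_eq_0: "(\<Sum>ij\<in>J. z ij \<cdot>\<^sub>W yterm (monom 1 (fst ij) * f (snd ij)) (snd ij)) = 0"
    and "i < CHAR('a)"
  shows "y_coeff (z (i, s mod CHAR('a))) (s - s mod CHAR('a)) = 0"
proof -
  let ?p = "CHAR('a)"
  let ?r = "s mod ?p"
  define c where "c i = y_coeff (z (i, ?r)) (s - ?r)" for i
  have "0 = y_coeff (\<Sum>ij\<in>J. z ij \<cdot>\<^sub>W yterm (monom 1 (fst ij) * f (snd ij)) (snd ij)) s"
    by (simp add: sum_eq_0)
  also have "\<dots> = (\<Sum>ij\<in>J. if snd ij = ?r then c (fst ij) * (monom 1 (fst ij) * f ?r) else 0)"
    unfolding y_coeff_sum
  proof (rule sum.cong[OF refl])
    fix ij assume "ij \<in> J"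
    obtain i j where ij: "ij = (i, j)"
      by force
    have "y_coeff (z ij \<cdot>\<^sub>W yterm (monom 1 (fst ij) * f (snd ij)) (snd ij)) s
        = (if j \<le> s then y_coeff (z (i, j)) (s - j) * (monom 1 i * f j) else 0)"
      using y_coeff_pcenter_mult_yterm[OF z[OF \<open>ij \<in> J\<close>]] by (simp add: ij)
    then show "y_coeff (z ij \<cdot>\<^sub>W yterm (monom 1 (fst ij) * f (snd ij)) (snd ij)) s
        = (if snd ij = ?r then c (fst ij) * (monom 1 (fst ij) * f ?r) else 0)"
      using y_coeff_pcenter_off_residue[OF z[OF \<open>ij \<in> J\<close>], of j s] \<open>ij \<in> J\<close>
      by (cases "j = ?r") (simp_all add: ij c_def J_def)
  qed
  also have "\<dots> = (\<Sum>i<?p. monom 1 i * c i) * f ?r"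
    using p by (simp add: J_def sum.cartesian_product' sum_distrib_left sum_distrib_right mult_ac)
  finally have "(\<Sum>i<?p. monom 1 i * c i) = 0"
    using f[of ?r] p by simp
  moreover have "pderiv (c i') = 0" if "i' < ?p" for i'
    using that p unfolding c_def by (intro weyl_pcenter_pderiv z) (simp add: J_def)
  ultimately show ?thesis
    using xp_components_unique[OF p, of c] \<open>i < ?p\<close> by (simp add: c_def)
qed

lemma pcenter_combination_eq_0:
  fixes f :: "nat \<Rightarrow> 'a::field poly"
  defines "J \<equiv> {..<CHAR('a)} \<times> {..<CHAR('a)}"
  assumes p: "CHAR('a) > 0"
    and f: "\<And>j. j < CHAR('a) \<Longrightarrow> f j \<noteq> 0"
    and z: "\<And>ij. ij \<in> J \<Longrightarrow> z ij \<in> weyl_pcenter"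
    and sum_eq_0: "(\<Sum>ij\<in>J. z ij \<cdot>\<^sub>W yterm (monom 1 (fst ij) * f (snd ij)) (snd ij)) = 0"
    and "ij \<in> J"
  shows "z ij \<cdot>\<^sub>W yterm (monom 1 (fst ij) * f (snd ij)) (snd ij) = 0"
proof (rule weyl_eq_0_if_y_coeff_eq_0)
  fix s
  obtain i j where ij: "ij = (i, j)" "i < CHAR('a)" "j < CHAR('a)"
    using \<open>ij \<in> J\<close> unfolding J_def by force
  have z_ij: "z (i, j) \<in> weyl_pcenter"
    using z \<open>ij \<in> J\<close> ij by simp
  show "y_coeff (z ij \<cdot>\<^sub>W yterm (monom 1 (fst ij) * f (snd ij)) (snd ij)) s = 0"
    using pcenter_combination_y_coeff_eq_0[OF p f z sum_eq_0[unfolded J_def] \<open>i < CHAR('a)\<close>, of s]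
      y_coeff_pcenter_off_residue[OF z_ij \<open>j < CHAR('a)\<close>, of s]
      y_coeff_pcenter_mult_yterm[OF z_ij, of "monom 1 i * f j" j s]
    by (cases "j = s mod CHAR('a)") (simp_all add: ij J_def)
qed

section \<open>Commutators with \<open>x\<close> and \<open>\<hat>y\<close>\<close>

lemma comm_setI: "a \<in> A \<Longrightarrow> c = weyl_comm u a \<Longrightarrow> c \<in> comm_set u A"
  unfolding comm_set_def by blast

lemma comm_set_A_h_0: "0 \<in> comm_set u (A_h h)"
  by (rule comm_setI[OF A_h_0]) simp

lemma comm_set_A_h_add:
  "c \<in> comm_set u (A_h h) \<Longrightarrow> d \<in> comm_set u (A_h h) \<Longrightarrow> c + d \<in> comm_set u (A_h h)"
  unfolding comm_set_def by (auto simp: weyl_comm_add[symmetric] intro!: A_h_add)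

lemma comm_set_A_h_center_mult:
  assumes "z \<in> weyl_center (A_h h)" "u \<in> A_h h" "c \<in> comm_set u (A_h h)"
  shows "z \<cdot>\<^sub>W c \<in> comm_set u (A_h h)"
proof -
  from assms(3) obtain a where a: "a \<in> A_h h" "c = weyl_comm u a"
    unfolding comm_set_def by blast
  have "z \<cdot>\<^sub>W a \<in> A_h h"
    using a assms(1) by (simp add: A_h_mult weyl_center_A_h_mem)
  moreover have "z \<cdot>\<^sub>W c = weyl_comm u (z \<cdot>\<^sub>W a)"
    using weyl_comm_mult_left[OF weyl_center_A_h_commute[OF assms(1,2)]] a by simp
  ultimately show ?thesis
    by (rule comm_setI)
qed

lemma y_coeff_comm_yhat_yterm:
  "y_coeff (weyl_comm (yhat h) (yterm g j)) s =
     (if s = Suc j then h * g else 0) + (if s = j then pderiv (h * g) else 0)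
     - (if s \<le> Suc j then g * smult (of_nat (Suc j choose (Suc j - s))) ((pderiv ^^ (Suc j - s)) h) else 0)"
proof -
  have delta: "(\<Sum>l\<le>n. if s = n - l then F l else 0) = (if s \<le> n then F (n - s) else 0)"
    for n and F :: "nat \<Rightarrow> 'a poly"
    by (subst sum.cong[OF refl, where h = "\<lambda>l. if l = n - s \<and> s \<le> n then F l else 0"])
      (auto simp: sum.delta)
  show ?thesis
    unfolding weyl_comm_def yhat_mult_yterm yterm_mult_yhat y_coeff_diff y_coeff_add y_coeff_sum
      y_coeff_yterm delta ..
qed

text \<open>Since \<open>[x, g y\<^sup>s\<^sup>+\<^sup>1] = -(s + 1) g y\<^sup>s\<close>, an element is a commutator with \<open>x\<close> as soon as its
  \<open>y\<^sup>s\<close>-coefficients can be divided by \<open>s + 1\<close> and keep the divisibility defining \<open>A_h\<close>.\<close>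

lemma comm_set_x_criterion:
  fixes h :: "'a::field poly"
  assumes dvd: "\<And>s. h ^ Suc s dvd y_coeff c s"
    and char: "\<And>s. y_coeff c s \<noteq> 0 \<Longrightarrow> \<not> CHAR('a) dvd Suc s"
  shows "c \<in> comm_set weyl_x (A_h h)"
proof (rule comm_setI)
  let ?N = "y_degree c"
  let ?b = "\<lambda>s. yterm (smult (- inverse (of_nat (Suc s))) (y_coeff c s)) (Suc s)"
  show "(\<Sum>s\<le>?N. ?b s) \<in> A_h h"
    by (intro A_h_sum yterm_in_A_h dvd_smult dvd)
  have "weyl_comm weyl_x (?b s) = yterm (y_coeff c s) s" for s
  proof (cases "y_coeff c s = 0")
    case False
    then have "(of_nat (Suc s) :: 'a) \<noteq> 0"
      using char by (simp only: of_nat_eq_0_iff_char_dvd) simp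
    have "weyl_comm weyl_x (?b s)
        = weyl_smult (- inverse (of_nat (Suc s)) * - of_nat (Suc s)) (yterm (y_coeff c s) s)"
      by (simp only: weyl_of_poly_smult weyl_smult_mult_left weyl_comm_smult weyl_comm_x_yterm
          diff_Suc_1 weyl_smult_smult)
    also have "- inverse (of_nat (Suc s)) * - of_nat (Suc s) = (1 :: 'a)"
      by (subst minus_mult_minus, rule left_inverse) fact
    finally show ?thesis
      by simp
  qed simp
  then show "c = weyl_comm weyl_x (\<Sum>s\<le>?N. ?b s)"
    by (simp add: weyl_comm_sum weyl_normal_form[symmetric])
qed

lemma y_coeff_comm_yhat_yterm_power:
  fixes h f :: "'a::field poly" and j :: nat
  defines "c \<equiv> weyl_comm (yhat h) (yterm (f * h ^ j) j)"
  shows "h ^ Suc s dvd y_coeff c s \<and> (y_coeff c s \<noteq> 0 \<longrightarrow> s \<le> j)"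
proof -
  let ?g = "f * h ^ j"
  consider "s = Suc j" | "s = j" | "s < j" | "Suc j < s"
    by linarith
  then show ?thesis
  proof cases
    case 2
    have "pderiv (h * ?g) = pderiv (f * h ^ Suc j)"
      by (simp add: algebra_simps)
    also have "\<dots> = f * smult (of_nat (Suc j)) (h ^ j * pderiv h) + h ^ Suc j * pderiv f"
      by (simp only: pderiv_mult pderiv_power_Suc) (simp add: algebra_simps)
    finally have "pderiv (h * ?g) - ?g * smult (of_nat (Suc j)) (pderiv h) = h ^ Suc j * pderiv f"
      by (simp add: algebra_simps)
    with 2 show ?thesis
      by (simp add: c_def y_coeff_comm_yhat_yterm)
  next
    case 3
    then have "h ^ Suc s dvd ?g"
      by (intro dvd_mult le_imp_power_dvd) simp
    then have "h ^ Suc s dvd ?g * smult (of_nat (Suc j choose (Suc j - s))) ((pderiv ^^ (Suc j - s)) h)"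
      by (rule dvd_mult2)
    with 3 show ?thesis
      by (simp add: c_def y_coeff_comm_yhat_yterm)
  qed (simp_all add: c_def y_coeff_comm_yhat_yterm algebra_simps)
qed

lemma comm_yhat_yterm_in_comm_set_x:
  fixes h f :: "'a::field poly"
  assumes "j + 2 \<le> CHAR('a)"
  shows "weyl_comm (yhat h) (yterm (f * h ^ j) j) \<in> comm_set weyl_x (A_h h)"
proof (rule comm_set_x_criterion)
  fix s
  show "h ^ Suc s dvd y_coeff (weyl_comm (yhat h) (yterm (f * h ^ j) j)) s"
    using y_coeff_comm_yhat_yterm_power by blast
  assume "y_coeff (weyl_comm (yhat h) (yterm (f * h ^ j) j)) s \<noteq> 0"
  then have "Suc s < CHAR('a)"
    using y_coeff_comm_yhat_yterm_power[where h = h and f = f and j = j and s = s] assms by simp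
  then show "\<not> CHAR('a) dvd Suc s"
    by (auto dest: dvd_imp_le)
qed

lemma comm_yhat_yterm_top:
  fixes h f :: "'a::field poly"
  assumes "CHAR('a) > 0"
  defines "q \<equiv> CHAR('a) - 1"
  shows "weyl_comm (yhat h) (yterm (f * h ^ q) q) = yterm (h * pderiv f * h ^ q) q"
proof -
  let ?p = "CHAR('a)"
  let ?g = "f * h ^ q"
  have p: "Suc q = ?p"
    using assms unfolding q_def by simp
  have "yterm ?g q \<cdot>\<^sub>W yhat h = weyl_of_poly ?g \<cdot>\<^sub>W (weyl_pow weyl_y ?p \<cdot>\<^sub>W weyl_of_poly h)"
    unfolding yhat_def p[symmetric]
    by (simp only: weyl_mult_assoc[symmetric]) (simp only: weyl_mult_assoc weyl_pow_Suc_right)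
  also have "\<dots> = weyl_of_poly ?g \<cdot>\<^sub>W (weyl_of_poly h \<cdot>\<^sub>W weyl_pow weyl_y ?p)"
    by (simp only: weyl_ypow_commute[OF dvd_refl])
  also have "\<dots> = yterm (h * ?g) ?p"
    by (simp only: weyl_mult_assoc[symmetric] weyl_of_poly_mult[symmetric] mult.commute[of ?g])
  finally have "yterm ?g q \<cdot>\<^sub>W yhat h = yterm (h * ?g) ?p" .
  moreover have "pderiv (h * ?g) = h * pderiv f * h ^ q"
    using p pderiv_power_eq_0_if_char_dvd[of ?p h]
    by (simp add: mult.left_commute[of h] power_Suc[symmetric] pderiv_mult del: power_Suc)
  ultimately show ?thesis
    using p by (simp add: weyl_comm_def yhat_mult_yterm)
qed

lemma comm_yhat_center_mult:
  "z \<in> weyl_center (A_h h) \<Longrightarrow> weyl_comm (yhat h) (z \<cdot>\<^sub>W b) = z \<cdot>\<^sub>W weyl_comm (yhat h) b"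
  by (rule weyl_comm_mult_left[OF weyl_center_A_h_commute[OF _ A_h_yhat]])

lemma comm_yhat_center_mult_in_comm_set_x:
  fixes h f :: "'a::field poly"
  assumes "z \<in> weyl_center (A_h h)" "j + 2 \<le> CHAR('a)"
  shows "weyl_comm (yhat h) (z \<cdot>\<^sub>W weyl_of_poly f \<cdot>\<^sub>W weyl_of_poly (h ^ j) \<cdot>\<^sub>W weyl_pow weyl_y j)
    \<in> comm_set weyl_x (A_h h)"
  using comm_set_A_h_center_mult[OF assms(1) A_h_x comm_yhat_yterm_in_comm_set_x[OF assms(2)]]
  by (simp add: weyl_mult_assoc weyl_of_poly_mult comm_yhat_center_mult[OF assms(1)])

lemma comm_yhat_center_mult_top:
  fixes h f :: "'a::field poly"
  assumes "CHAR('a) > 0" "z \<in> weyl_center (A_h h)"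
  defines "q \<equiv> CHAR('a) - 1"
  shows "weyl_comm (yhat h) (z \<cdot>\<^sub>W weyl_of_poly f \<cdot>\<^sub>W weyl_of_poly (h ^ q) \<cdot>\<^sub>W weyl_pow weyl_y q)
    = z \<cdot>\<^sub>W weyl_of_poly h \<cdot>\<^sub>W weyl_of_poly (pderiv f) \<cdot>\<^sub>W weyl_of_poly (h ^ q) \<cdot>\<^sub>W weyl_pow weyl_y q"
  using comm_yhat_yterm_top[OF assms(1), of h f]
  by (simp add: q_def weyl_mult_assoc weyl_of_poly_mult comm_yhat_center_mult[OF assms(2)])

section \<open>The space \<open>[x, A_h] + [\<hat>y, A_h]\<close>\<close>

definition commutator_space :: "'a::field poly \<Rightarrow> 'a weyl set" where
  "commutator_space h = {u + v | u v. u \<in> comm_set weyl_x (A_h h) \<and> v \<in> comm_set (yhat h) (A_h h)}"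

definition commutator_basis :: "'a::field poly \<Rightarrow> nat \<times> nat \<Rightarrow> 'a weyl" where
  "commutator_basis h ij = weyl_of_poly h \<cdot>\<^sub>W A_h_basis h ij"

definition commutator_indices :: "nat \<Rightarrow> (nat \<times> nat) set" where
  "commutator_indices p = {..<p} \<times> {..<p} - {(p - 1, p - 1)}"

definition center_span :: "'a::field poly \<Rightarrow> (nat \<times> nat) set \<Rightarrow> 'a weyl set" where
  "center_span h I = {\<Sum>ij\<in>I. z ij \<cdot>\<^sub>W commutator_basis h ij | z. \<forall>ij\<in>I. z ij \<in> weyl_center (A_h h)}"

lemma commutator_indices_insert_corner:
  "p > 0 \<Longrightarrow> {..<p} \<times> {..<p} = insert (p - 1, p - 1) (commutator_indices p)"
  and corner_notin_commutator_indices: "(p - 1, p - 1) \<notin> commutator_indices p"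
  unfolding commutator_indices_def by auto

lemma finite_commutator_indices: "finite (commutator_indices p)"
  unfolding commutator_indices_def by simp

lemma commutator_basis_eq_yterm: "commutator_basis h (i, j) = yterm (monom 1 i * h ^ Suc j) j"
  by (simp add: commutator_basis_def A_h_basis_eq_yterm weyl_mult_assoc[symmetric]
      weyl_of_poly_mult[symmetric] algebra_simps)

lemma weyl_center_A_h_mult_poly:
  "z \<in> weyl_center (A_h h) \<Longrightarrow> z \<cdot>\<^sub>W (weyl_of_poly g \<cdot>\<^sub>W e) = weyl_of_poly g \<cdot>\<^sub>W (z \<cdot>\<^sub>W e)"
  by (simp only: weyl_mult_assoc[symmetric] weyl_center_A_h_commute[OF _ A_h_poly])

lemma center_spanI:
  "(\<And>ij. ij \<in> I \<Longrightarrow> z ij \<in> weyl_center (A_h h)) \<Longrightarrow> a = (\<Sum>ij\<in>I. z ij \<cdot>\<^sub>W commutator_basis h ij)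
    \<Longrightarrow> a \<in> center_span h I"
  unfolding center_span_def by blast

lemma center_span_0: "0 \<in> center_span h I"
  unfolding center_span_def using weyl_center_A_h_0 by force

lemma center_span_add:
  assumes "a \<in> center_span h I" "b \<in> center_span h I"
  shows "a + b \<in> center_span h I"
proof -
  obtain za zb where
    za: "\<forall>ij\<in>I. za ij \<in> weyl_center (A_h h)" "a = (\<Sum>ij\<in>I. za ij \<cdot>\<^sub>W commutator_basis h ij)" and
    zb: "\<forall>ij\<in>I. zb ij \<in> weyl_center (A_h h)" "b = (\<Sum>ij\<in>I. zb ij \<cdot>\<^sub>W commutator_basis h ij)"
    using assms unfolding center_span_def by blast
  then have "a + b = (\<Sum>ij\<in>I. (za ij + zb ij) \<cdot>\<^sub>W commutator_basis h ij)"
    by (simp add: weyl_distrib_right sum.distrib)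
  moreover have "za ij + zb ij \<in> weyl_center (A_h h)" if "ij \<in> I" for ij
    using za zb that by (simp add: weyl_center_A_h_add)
  ultimately show ?thesis
    by (intro center_spanI[where z = "\<lambda>ij. za ij + zb ij"])
qed

lemma center_span_sum:
  "(\<And>k. k \<in> K \<Longrightarrow> f k \<in> center_span h I) \<Longrightarrow> (\<Sum>k\<in>K. f k) \<in> center_span h I"
  by (induction K rule: infinite_finite_induct) (simp_all add: center_span_0 center_span_add)

lemma center_span_single:
  assumes "finite I" "ij \<in> I" "z \<in> weyl_center (A_h h)"
  shows "z \<cdot>\<^sub>W commutator_basis h ij \<in> center_span h I"
proof -
  have "z \<cdot>\<^sub>W commutator_basis h ij = (\<Sum>kl\<in>I. (if kl = ij then z else 0) \<cdot>\<^sub>W commutator_basis h kl)"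
    using assms(1,2) by (simp add: if_distrib[where f = "\<lambda>a. a \<cdot>\<^sub>W _"] sum.delta' cong: if_cong)
  with assms(3) show ?thesis
    by (intro center_spanI[where z = "\<lambda>kl. if kl = ij then z else 0"]) (simp_all add: weyl_center_A_h_0)
qed

lemma comm_x_A_h_basis:
  "weyl_comm weyl_x (A_h_basis h (i, j)) = weyl_smult (- of_nat j) (commutator_basis h (i, j - 1))"
proof -
  have "weyl_comm weyl_x (A_h_basis h (i, j)) = weyl_smult (- of_nat j) (yterm (monom 1 i * h ^ j) (j - 1))"
    by (simp only: A_h_basis_eq_yterm weyl_comm_x_yterm)
  then show ?thesis
    by (cases j) (simp_all add: commutator_basis_eq_yterm del: weyl_pow.simps)
qed

lemma comm_yhat_A_h_basis_top:
  fixes h :: "'a::field poly"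
  assumes "CHAR('a) > 0"
  defines "q \<equiv> CHAR('a) - 1"
  shows "weyl_comm (yhat h) (A_h_basis h (i, q)) = weyl_smult (of_nat i) (commutator_basis h (i - 1, q))"
proof -
  have "monom (of_nat i) (i - 1) = smult (of_nat i) (monom (1 :: 'a) (i - 1))"
    by (simp add: smult_monom)
  then have "h * pderiv (monom 1 i) * h ^ q = smult (of_nat i) (monom 1 (i - 1) * h ^ Suc q)"
    by (simp add: pderiv_monom algebra_simps)
  then show ?thesis
    using comm_yhat_yterm_top[OF assms(1), of h "monom 1 i"]
    by (simp add: q_def A_h_basis_eq_yterm commutator_basis_eq_yterm weyl_of_poly_smult
        weyl_smult_mult_left)
qed

lemma comm_set_A_h_subset_center_span:
  fixes h :: "'a::field poly"
  assumes p: "CHAR('a) > 0" and "u \<in> A_h h"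
    and basis: "\<And>z ij. z \<in> weyl_center (A_h h) \<Longrightarrow> ij \<in> {..<CHAR('a)} \<times> {..<CHAR('a)}
      \<Longrightarrow> z \<cdot>\<^sub>W weyl_comm u (A_h_basis h ij) \<in> center_span h I"
  shows "comm_set u (A_h h) \<subseteq> center_span h I"
proof
  let ?p = "CHAR('a)"
  fix c assume "c \<in> comm_set u (A_h h)"
  then obtain a where a: "a \<in> A_h h" "c = weyl_comm u a"
    unfolding comm_set_def by blast
  from A_h_decomposition[OF p a(1)] obtain z where z: "\<And>ij. z ij \<in> weyl_center (A_h h)"
    and a_eq: "a = (\<Sum>ij\<in>{..<?p} \<times> {..<?p}. z ij \<cdot>\<^sub>W A_h_basis h ij)"
    by blast
  have "c = (\<Sum>ij\<in>{..<?p} \<times> {..<?p}. z ij \<cdot>\<^sub>W weyl_comm u (A_h_basis h ij))"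
    unfolding a a_eq weyl_comm_sum
    by (intro sum.cong refl weyl_comm_mult_left weyl_center_A_h_commute[OF z \<open>u \<in> A_h h\<close>])
  also have "\<dots> \<in> center_span h I"
    by (intro center_span_sum basis z)
  finally show "c \<in> center_span h I" .
qed

lemma center_mult_comm_x_A_h_basis_in_center_span:
  fixes h :: "'a::field poly"
  assumes z: "z \<in> weyl_center (A_h h)" and ij: "ij \<in> {..<CHAR('a)} \<times> {..<CHAR('a)}"
  shows "z \<cdot>\<^sub>W weyl_comm weyl_x (A_h_basis h ij) \<in> center_span h (commutator_indices CHAR('a))"
proof -
  obtain i j where ij_eq: "ij = (i, j)"
    by force
  have "z \<cdot>\<^sub>W weyl_comm weyl_x (A_h_basis h ij) = weyl_smult (- of_nat j) z \<cdot>\<^sub>W commutator_basis h (i, j - 1)"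
    by (simp add: ij_eq comm_x_A_h_basis weyl_smult_mult_left weyl_smult_mult_right)
  moreover have "j \<noteq> 0 \<Longrightarrow> (i, j - 1) \<in> commutator_indices CHAR('a)"
    using ij ij_eq unfolding commutator_indices_def by auto
  ultimately show ?thesis
    by (cases "j = 0")
      (simp_all add: center_span_0 center_span_single finite_commutator_indices weyl_center_A_h_smult z)
qed

lemma comm_set_x_subset_center_span:
  fixes h :: "'a::field poly"
  assumes "CHAR('a) > 0"
  shows "comm_set weyl_x (A_h h) \<subseteq> center_span h (commutator_indices CHAR('a))"
  by (rule comm_set_A_h_subset_center_span[OF assms A_h_x center_mult_comm_x_A_h_basis_in_center_span])

lemma center_mult_comm_yhat_A_h_basis_in_center_span:
  fixes h :: "'a::field poly"
  assumes p: "CHAR('a) > 0"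
    and z: "z \<in> weyl_center (A_h h)" and ij: "ij \<in> {..<CHAR('a)} \<times> {..<CHAR('a)}"
  shows "z \<cdot>\<^sub>W weyl_comm (yhat h) (A_h_basis h ij) \<in> center_span h (commutator_indices CHAR('a))"
proof -
  let ?p = "CHAR('a)"
  obtain i j where ij_eq: "ij = (i, j)"
    by force
  show ?thesis
  proof (cases "j + 2 \<le> ?p")
    case True
    have "weyl_comm (yhat h) (A_h_basis h ij) \<in> comm_set weyl_x (A_h h)"
      using comm_yhat_yterm_in_comm_set_x[OF True, of h "monom 1 i"]
      by (simp add: ij_eq A_h_basis_eq_yterm)
    then show ?thesis
      using comm_set_x_subset_center_span[OF p] comm_set_A_h_center_mult[OF z A_h_x] by blast
  next
    case False
    then have j: "j = ?p - 1"
      using ij ij_eq by auto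
    have "z \<cdot>\<^sub>W weyl_comm (yhat h) (A_h_basis h ij) = z \<cdot>\<^sub>W weyl_smult (of_nat i) (commutator_basis h (i - 1, ?p - 1))"
      by (simp only: ij_eq j comm_yhat_A_h_basis_top[OF p])
    then have "z \<cdot>\<^sub>W weyl_comm (yhat h) (A_h_basis h ij) = weyl_smult (of_nat i) z \<cdot>\<^sub>W commutator_basis h (i - 1, ?p - 1)"
      by (simp only: weyl_smult_mult_left weyl_smult_mult_right)
    moreover have "i \<noteq> 0 \<Longrightarrow> (i - 1, ?p - 1) \<in> commutator_indices ?p"
      using ij ij_eq unfolding commutator_indices_def by auto
    ultimately show ?thesis
      by (cases "i = 0")
        (simp_all add: center_span_0 center_span_single finite_commutator_indices weyl_center_A_h_smult z)
  qed
qed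

lemma comm_set_yhat_subset_center_span:
  fixes h :: "'a::field poly"
  assumes "CHAR('a) > 0"
  shows "comm_set (yhat h) (A_h h) \<subseteq> center_span h (commutator_indices CHAR('a))"
  by (rule comm_set_A_h_subset_center_span[OF assms A_h_yhat
      center_mult_comm_yhat_A_h_basis_in_center_span[OF assms]])

lemma commutator_spaceI:
  "u \<in> comm_set weyl_x (A_h h) \<Longrightarrow> v \<in> comm_set (yhat h) (A_h h) \<Longrightarrow> u + v \<in> commutator_space h"
  unfolding commutator_space_def by blast

lemma commutator_space_add:
  assumes "a \<in> commutator_space h" "b \<in> commutator_space h"
  shows "a + b \<in> commutator_space h"
proof -
  obtain u v u' v' where "u \<in> comm_set weyl_x (A_h h)" "v \<in> comm_set (yhat h) (A_h h)" "a = u + v"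
    "u' \<in> comm_set weyl_x (A_h h)" "v' \<in> comm_set (yhat h) (A_h h)" "b = u' + v'"
    using assms unfolding commutator_space_def by blast
  then show ?thesis
    using commutator_spaceI[of "u + u'" h "v + v'"] by (simp add: comm_set_A_h_add algebra_simps)
qed

lemma commutator_space_sum:
  "(\<And>k. k \<in> K \<Longrightarrow> f k \<in> commutator_space h) \<Longrightarrow> (\<Sum>k\<in>K. f k) \<in> commutator_space h"
  by (induction K rule: infinite_finite_induct)
    (simp_all add: commutator_space_add commutator_spaceI[of 0 h 0, simplified] comm_set_A_h_0)

lemma of_nat_Suc_neq_0_if_less_char: "k + 2 \<le> CHAR('a) \<Longrightarrow> (of_nat (Suc k) :: 'a::semiring_1) \<noteq> 0"
  by (auto simp only: of_nat_eq_0_iff_char_dvd dest!: dvd_imp_le)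

text \<open>Off the corner, \<open>z h x\<^sup>i h\<^sup>j y\<^sup>j\<close> is, up to a unit, the commutator of \<open>z x\<^sup>i h\<^sup>j\<^sup>+\<^sup>1 y\<^sup>j\<^sup>+\<^sup>1\<close>
  with \<open>x\<close> (if \<open>j < p - 1\<close>) or of \<open>z x\<^sup>i\<^sup>+\<^sup>1 h\<^sup>p\<^sup>-\<^sup>1 y\<^sup>p\<^sup>-\<^sup>1\<close> with \<open>\<hat>y\<close> (if \<open>j = p - 1\<close>, \<open>i < p - 1\<close>).\<close>

lemma center_mult_commutator_basis_in_comm_set_x:
  fixes h :: "'a::field poly"
  assumes z: "z \<in> weyl_center (A_h h)" and j: "j + 2 \<le> CHAR('a)"
  shows "z \<cdot>\<^sub>W commutator_basis h (i, j) \<in> comm_set weyl_x (A_h h)"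
proof (rule comm_setI)
  let ?e = "- inverse (of_nat (Suc j)) :: 'a"
  show "weyl_smult ?e (z \<cdot>\<^sub>W A_h_basis h (i, Suc j)) \<in> A_h h"
    by (intro A_h_smult A_h_mult weyl_center_A_h_mem[OF z] A_h_basis_in_A_h)
  have "weyl_comm weyl_x (weyl_smult ?e (z \<cdot>\<^sub>W A_h_basis h (i, Suc j)))
      = weyl_smult (?e * - of_nat (Suc j)) (z \<cdot>\<^sub>W commutator_basis h (i, j))"
    by (simp only: weyl_comm_smult weyl_comm_mult_left[OF weyl_center_A_h_commute[OF z A_h_x]]
        comm_x_A_h_basis weyl_smult_mult_right weyl_smult_smult diff_Suc_1)
  also have "?e * - of_nat (Suc j) = 1"
    by (subst minus_mult_minus, rule left_inverse, rule of_nat_Suc_neq_0_if_less_char[OF j])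
  finally show "z \<cdot>\<^sub>W commutator_basis h (i, j) = weyl_comm weyl_x (weyl_smult ?e (z \<cdot>\<^sub>W A_h_basis h (i, Suc j)))"
    by simp
qed

lemma center_mult_commutator_basis_top_in_comm_set_yhat:
  fixes h :: "'a::field poly"
  assumes p: "CHAR('a) > 0" and z: "z \<in> weyl_center (A_h h)" and i: "i + 2 \<le> CHAR('a)"
  defines "q \<equiv> CHAR('a) - 1"
  shows "z \<cdot>\<^sub>W commutator_basis h (i, q) \<in> comm_set (yhat h) (A_h h)"
proof (rule comm_setI)
  let ?e = "inverse (of_nat (Suc i)) :: 'a"
  show "weyl_smult ?e (z \<cdot>\<^sub>W A_h_basis h (Suc i, q)) \<in> A_h h"
    by (intro A_h_smult A_h_mult weyl_center_A_h_mem[OF z] A_h_basis_in_A_h)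
  have "weyl_comm (yhat h) (weyl_smult ?e (z \<cdot>\<^sub>W A_h_basis h (Suc i, q)))
      = weyl_smult (?e * of_nat (Suc i)) (z \<cdot>\<^sub>W commutator_basis h (i, q))"
    unfolding q_def
    by (simp only: weyl_comm_smult weyl_comm_mult_left[OF weyl_center_A_h_commute[OF z A_h_yhat]]
        comm_yhat_A_h_basis_top[OF p] weyl_smult_mult_right weyl_smult_smult diff_Suc_1)
  also have "?e * of_nat (Suc i) = 1"
    by (rule left_inverse, rule of_nat_Suc_neq_0_if_less_char[OF i])
  finally show "z \<cdot>\<^sub>W commutator_basis h (i, q) = weyl_comm (yhat h) (weyl_smult ?e (z \<cdot>\<^sub>W A_h_basis h (Suc i, q)))"
    by simp
qed

lemma center_span_subset_commutator_space:
  fixes h :: "'a::field poly"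
  assumes p: "CHAR('a) > 0"
  shows "center_span h (commutator_indices CHAR('a)) \<subseteq> commutator_space h"
proof
  let ?p = "CHAR('a)"
  have "z \<cdot>\<^sub>W commutator_basis h (i, j) \<in> commutator_space h"
    if z: "z \<in> weyl_center (A_h h)" and ij: "(i, j) \<in> commutator_indices ?p" for z i j
  proof (cases "j + 2 \<le> ?p")
    case True
    then show ?thesis
      using commutator_spaceI[OF center_mult_commutator_basis_in_comm_set_x[OF z True] comm_set_A_h_0]
      by simp
  next
    case False
    then have "j = ?p - 1" "i + 2 \<le> ?p"
      using ij unfolding commutator_indices_def by auto
    then show ?thesis
      using commutator_spaceI[OF comm_set_A_h_0 center_mult_commutator_basis_top_in_comm_set_yhat[OF p z]]
      by simp
  qed
  then show "c \<in> commutator_space h" if "c \<in> center_span h (commutator_indices ?p)" for c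
    using that unfolding center_span_def by (auto intro!: commutator_space_sum)
qed

lemma commutator_space_eq_center_span:
  fixes h :: "'a::field poly"
  assumes "CHAR('a) > 0"
  shows "commutator_space h = center_span h (commutator_indices CHAR('a))"
  using comm_set_x_subset_center_span[OF assms] comm_set_yhat_subset_center_span[OF assms]
    center_span_add center_span_subset_commutator_space[OF assms]
  unfolding commutator_space_def by blast

lemma center_mult_commutator_basis:
  "z \<in> weyl_center (A_h h) \<Longrightarrow> z \<cdot>\<^sub>W commutator_basis h ij = weyl_of_poly h \<cdot>\<^sub>W (z \<cdot>\<^sub>W A_h_basis h ij)"
  unfolding commutator_basis_def by (rule weyl_center_A_h_mult_poly)

lemma center_combination_eq_0:
  fixes h :: "'a::field poly"
  defines "J \<equiv> {..<CHAR('a)} \<times> {..<CHAR('a)}"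
  assumes "CHAR('a) > 0" "h \<noteq> 0"
    and z: "\<And>ij. ij \<in> J \<Longrightarrow> z ij \<in> weyl_center (A_h h)"
    and sum_eq_0: "(\<Sum>ij\<in>J. z ij \<cdot>\<^sub>W commutator_basis h ij) = 0"
    and "ij \<in> J"
  shows "z ij \<cdot>\<^sub>W commutator_basis h ij = 0"
proof -
  have basis: "commutator_basis h ij = yterm (monom 1 (fst ij) * (\<lambda>j. h ^ Suc j) (snd ij)) (snd ij)" for ij
    by (cases ij) (simp only: commutator_basis_eq_yterm fst_conv snd_conv)
  show ?thesis
    unfolding basis
  proof (rule pcenter_combination_eq_0)
    show "z ij \<in> weyl_pcenter" if "ij \<in> {..<CHAR('a)} \<times> {..<CHAR('a)}" for ij
      using z that weyl_center_A_h_subset_pcenter[OF \<open>h \<noteq> 0\<close>] unfolding J_def by blast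
  qed (use assms basis in simp_all)
qed

lemma center_span_direct:
  fixes h :: "'a::field poly"
  defines "I \<equiv> commutator_indices CHAR('a)"
  assumes p: "CHAR('a) > 0" and "h \<noteq> 0"
    and z: "\<forall>ij\<in>I. z ij \<in> weyl_center (A_h h)"
    and sum_eq_0: "(\<Sum>ij\<in>I. z ij \<cdot>\<^sub>W commutator_basis h ij) = 0"
    and "ij \<in> I"
  shows "z ij \<cdot>\<^sub>W commutator_basis h ij = 0"
proof -
  let ?J = "{..<CHAR('a)} \<times> {..<CHAR('a)}"
  let ?z = "\<lambda>ij. if ij \<in> I then z ij else 0"
  have "(\<Sum>ij\<in>?J. ?z ij \<cdot>\<^sub>W commutator_basis h ij)
      = (\<Sum>ij\<in>?J. if ij \<in> I then z ij \<cdot>\<^sub>W commutator_basis h ij else 0)"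
    by (rule sum.cong) simp_all
  also have "\<dots> = (\<Sum>ij\<in>?J \<inter> I. z ij \<cdot>\<^sub>W commutator_basis h ij)"
    by (rule sum.inter_restrict[symmetric]) simp
  also have "?J \<inter> I = I"
    unfolding I_def commutator_indices_def by auto
  finally have "(\<Sum>ij\<in>?J. ?z ij \<cdot>\<^sub>W commutator_basis h ij) = 0"
    using sum_eq_0 by simp
  then have "?z ij \<cdot>\<^sub>W commutator_basis h ij = 0"
    by (rule center_combination_eq_0[OF p \<open>h \<noteq> 0\<close>, rotated])
      (use z weyl_center_A_h_0 \<open>ij \<in> I\<close> in \<open>auto simp: I_def commutator_indices_def\<close>)
  with \<open>ij \<in> I\<close> show ?thesis
    by simp
qed

lemma center_mult_corner_eq:
  "z \<in> weyl_center (A_h h) \<Longrightarrow>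
    weyl_of_poly h \<cdot>\<^sub>W z \<cdot>\<^sub>W weyl_pow weyl_x q \<cdot>\<^sub>W weyl_of_poly (h ^ q) \<cdot>\<^sub>W weyl_pow weyl_y q
      = z \<cdot>\<^sub>W commutator_basis h (q, q)"
  by (simp add: center_mult_commutator_basis A_h_basis_def weyl_mult_assoc)

lemma h_mult_A_h_eq:
  fixes h :: "'a::field poly"
  assumes p: "CHAR('a) > 0"
  defines "q \<equiv> CHAR('a) - 1"
  shows "{weyl_of_poly h \<cdot>\<^sub>W a | a. a \<in> A_h h}
    = {u + weyl_of_poly h \<cdot>\<^sub>W z \<cdot>\<^sub>W weyl_pow weyl_x q \<cdot>\<^sub>W weyl_of_poly (h ^ q) \<cdot>\<^sub>W weyl_pow weyl_y q
       | u z. u \<in> commutator_space h \<and> z \<in> weyl_center (A_h h)}"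
proof (intro equalityI subsetI)
  let ?I = "commutator_indices CHAR('a)"
  fix c assume "c \<in> {weyl_of_poly h \<cdot>\<^sub>W a | a. a \<in> A_h h}"
  then obtain a where a: "a \<in> A_h h" "c = weyl_of_poly h \<cdot>\<^sub>W a"
    by blast
  from A_h_decomposition[OF p a(1)] obtain z where z: "\<And>ij. z ij \<in> weyl_center (A_h h)"
    and a_eq: "a = (\<Sum>ij\<in>{..<CHAR('a)} \<times> {..<CHAR('a)}. z ij \<cdot>\<^sub>W A_h_basis h ij)"
    by blast
  have "c = (\<Sum>ij\<in>insert (q, q) ?I. z ij \<cdot>\<^sub>W commutator_basis h ij)"
    unfolding a a_eq weyl_mult_sum commutator_indices_insert_corner[OF p] q_def
    by (simp add: center_mult_commutator_basis z)
  also have "\<dots> = (\<Sum>ij\<in>?I. z ij \<cdot>\<^sub>W commutator_basis h ij) + z (q, q) \<cdot>\<^sub>W commutator_basis h (q, q)"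
    using finite_commutator_indices corner_notin_commutator_indices by (simp add: q_def add.commute)
  also have "\<dots> = (\<Sum>ij\<in>?I. z ij \<cdot>\<^sub>W commutator_basis h ij) + weyl_of_poly h \<cdot>\<^sub>W z (q, q)
      \<cdot>\<^sub>W weyl_pow weyl_x q \<cdot>\<^sub>W weyl_of_poly (h ^ q) \<cdot>\<^sub>W weyl_pow weyl_y q"
    by (simp add: center_mult_corner_eq z)
  finally show "c \<in> {u + weyl_of_poly h \<cdot>\<^sub>W z \<cdot>\<^sub>W weyl_pow weyl_x q \<cdot>\<^sub>W weyl_of_poly (h ^ q) \<cdot>\<^sub>W weyl_pow weyl_y q
      | u z. u \<in> commutator_space h \<and> z \<in> weyl_center (A_h h)}"
    using commutator_space_eq_center_span[OF p] center_spanI[of ?I z] z by blast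
next
  fix c assume "c \<in> {u + weyl_of_poly h \<cdot>\<^sub>W z \<cdot>\<^sub>W weyl_pow weyl_x q \<cdot>\<^sub>W weyl_of_poly (h ^ q)
    \<cdot>\<^sub>W weyl_pow weyl_y q | u z. u \<in> commutator_space h \<and> z \<in> weyl_center (A_h h)}"
  then obtain u z0 where u: "u \<in> center_span h (commutator_indices CHAR('a))"
    and z0: "z0 \<in> weyl_center (A_h h)" and c_eq: "c = u + weyl_of_poly h \<cdot>\<^sub>W z0 \<cdot>\<^sub>W weyl_pow weyl_x q
      \<cdot>\<^sub>W weyl_of_poly (h ^ q) \<cdot>\<^sub>W weyl_pow weyl_y q"
    using commutator_space_eq_center_span[OF p] by blast
  have c: "c = u + z0 \<cdot>\<^sub>W commutator_basis h (q, q)"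
    using c_eq by (simp add: center_mult_corner_eq[OF z0])
  from u obtain z where z: "\<forall>ij\<in>commutator_indices CHAR('a). z ij \<in> weyl_center (A_h h)"
    and u_eq: "u = (\<Sum>ij\<in>commutator_indices CHAR('a). z ij \<cdot>\<^sub>W commutator_basis h ij)"
    unfolding center_span_def by blast
  let ?a = "(\<Sum>ij\<in>commutator_indices CHAR('a). z ij \<cdot>\<^sub>W A_h_basis h ij) + z0 \<cdot>\<^sub>W A_h_basis h (q, q)"
  have "c = weyl_of_poly h \<cdot>\<^sub>W ?a"
    unfolding c u_eq weyl_distrib_left weyl_mult_sum
    by (simp add: center_mult_commutator_basis z z0)
  moreover have "?a \<in> A_h h"
    using z z0 by (intro A_h_add A_h_sum A_h_mult weyl_center_A_h_mem A_h_basis_in_A_h) auto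
  ultimately show "c \<in> {weyl_of_poly h \<cdot>\<^sub>W a | a. a \<in> A_h h}"
    by blast
qed

lemma commutator_space_inter_corner:
  fixes h :: "'a::field poly"
  assumes p: "CHAR('a) > 0" and "h \<noteq> 0"
  defines "q \<equiv> CHAR('a) - 1"
  shows "commutator_space h \<inter> {weyl_of_poly h \<cdot>\<^sub>W z \<cdot>\<^sub>W weyl_pow weyl_x q \<cdot>\<^sub>W weyl_of_poly (h ^ q)
    \<cdot>\<^sub>W weyl_pow weyl_y q | z. z \<in> weyl_center (A_h h)} = {0}"
proof (intro equalityI subsetI)
  let ?I = "commutator_indices CHAR('a)"
  fix c assume "c \<in> commutator_space h \<inter> {weyl_of_poly h \<cdot>\<^sub>W z \<cdot>\<^sub>W weyl_pow weyl_x q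
    \<cdot>\<^sub>W weyl_of_poly (h ^ q) \<cdot>\<^sub>W weyl_pow weyl_y q | z. z \<in> weyl_center (A_h h)}"
  then obtain z0 where "c \<in> center_span h ?I" and z0: "z0 \<in> weyl_center (A_h h)"
    and c_eq: "c = weyl_of_poly h \<cdot>\<^sub>W z0 \<cdot>\<^sub>W weyl_pow weyl_x q \<cdot>\<^sub>W weyl_of_poly (h ^ q) \<cdot>\<^sub>W weyl_pow weyl_y q"
    using commutator_space_eq_center_span[OF p] by blast
  then obtain z where z: "\<forall>ij\<in>?I. z ij \<in> weyl_center (A_h h)"
    and c_sum: "c = (\<Sum>ij\<in>?I. z ij \<cdot>\<^sub>W commutator_basis h ij)"
    unfolding center_span_def by blast
  have c: "c = z0 \<cdot>\<^sub>W commutator_basis h (q, q)"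
    using c_eq by (simp add: center_mult_corner_eq[OF z0])
  let ?z = "\<lambda>ij. if ij \<in> ?I then z ij else - z0"
  have "(\<Sum>ij\<in>insert (q, q) ?I. ?z ij \<cdot>\<^sub>W commutator_basis h ij) = - c + c"
    using finite_commutator_indices corner_notin_commutator_indices
    by (simp add: q_def c_sum[symmetric] c weyl_minus_mult cong: sum.cong)
  then have "?z (q, q) \<cdot>\<^sub>W commutator_basis h (q, q) = 0"
    by (intro center_combination_eq_0[OF p \<open>h \<noteq> 0\<close>])
      (use z z0 weyl_center_A_h_uminus commutator_indices_insert_corner[OF p] in \<open>auto simp: q_def\<close>)
  then show "c \<in> {0}"
    using corner_notin_commutator_indices by (simp add: q_def c weyl_minus_mult)
next
  fix c :: "'a weyl" assume "c \<in> {0}"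
  moreover have "0 \<in> commutator_space h"
    using commutator_spaceI[OF comm_set_A_h_0 comm_set_A_h_0] by simp
  moreover have "(0 :: 'a weyl) = weyl_of_poly h \<cdot>\<^sub>W 0 \<cdot>\<^sub>W weyl_pow weyl_x q \<cdot>\<^sub>W weyl_of_poly (h ^ q)
      \<cdot>\<^sub>W weyl_pow weyl_y q"
    by simp
  ultimately show "c \<in> commutator_space h \<inter> {weyl_of_poly h \<cdot>\<^sub>W z \<cdot>\<^sub>W weyl_pow weyl_x q
      \<cdot>\<^sub>W weyl_of_poly (h ^ q) \<cdot>\<^sub>W weyl_pow weyl_y q | z. z \<in> weyl_center (A_h h)}"
    using weyl_center_A_h_0 by blast
qed

theorem lemma2p3:
  fixes h :: "'a::field poly" and p :: nat
  defines "A \<equiv> A_h h"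
  defines "Z \<equiv> weyl_center (A_h h)"
  defines "H \<equiv> weyl_of_poly h"
  defines "C \<equiv> {u + v | u v. u \<in> comm_set weyl_x (A_h h) \<and> v \<in> comm_set (yhat h) (A_h h)}"
  defines "I \<equiv> ({0..p-1} \<times> {0..p-1}) - {(p-1, p-1)}"
  defines "w \<equiv> (\<lambda>(i,j). H \<cdot>\<^sub>W weyl_pow weyl_x i \<cdot>\<^sub>W weyl_of_poly (h ^ j) \<cdot>\<^sub>W weyl_pow weyl_y j)"
  assumes "CHAR('a) = p" and "p > 0" and "h \<noteq> 0"
  shows
   "(\<forall>z\<in>Z. \<forall>f::'a poly. \<forall>j. j \<le> p - 2 \<longrightarrow>
        weyl_comm (yhat h) (z \<cdot>\<^sub>W weyl_of_poly f \<cdot>\<^sub>W weyl_of_poly (h ^ j) \<cdot>\<^sub>W weyl_pow weyl_y j)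
          \<in> comm_set weyl_x A)
    \<and> (\<forall>z\<in>Z. \<forall>f::'a poly.
        weyl_comm (yhat h) (z \<cdot>\<^sub>W weyl_of_poly f \<cdot>\<^sub>W weyl_of_poly (h ^ (p - 1)) \<cdot>\<^sub>W weyl_pow weyl_y (p - 1))
          = z \<cdot>\<^sub>W H \<cdot>\<^sub>W weyl_of_poly (pderiv f) \<cdot>\<^sub>W weyl_of_poly (h ^ (p - 1)) \<cdot>\<^sub>W weyl_pow weyl_y (p - 1))
    \<and> C = {\<Sum>ij\<in>I. zz ij \<cdot>\<^sub>W w ij | zz. \<forall>ij\<in>I. zz ij \<in> Z}
    \<and> (\<forall>zz. (\<forall>ij\<in>I. zz ij \<in> Z) \<longrightarrow> (\<Sum>ij\<in>I. zz ij \<cdot>\<^sub>W w ij) = 0 \<longrightarrow>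
          (\<forall>ij\<in>I. zz ij \<cdot>\<^sub>W w ij = 0))
    \<and> {H \<cdot>\<^sub>W a | a. a \<in> A} =
        {u + H \<cdot>\<^sub>W z \<cdot>\<^sub>W weyl_pow weyl_x (p - 1) \<cdot>\<^sub>W weyl_of_poly (h ^ (p - 1)) \<cdot>\<^sub>W weyl_pow weyl_y (p - 1)
          | u z. u \<in> C \<and> z \<in> Z}
    \<and> C \<inter> {H \<cdot>\<^sub>W z \<cdot>\<^sub>W weyl_pow weyl_x (p - 1) \<cdot>\<^sub>W weyl_of_poly (h ^ (p - 1)) \<cdot>\<^sub>W weyl_pow weyl_y (p - 1)
          | z. z \<in> Z} = {0}"
proof -
  have p: "CHAR('a) > 0" "p = CHAR('a)" "2 \<le> p"
    using assms CHAR_not_1[where 'a = 'a] by auto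
  have I: "I = commutator_indices p"
    using \<open>p > 0\<close> unfolding I_def commutator_indices_def by auto
  have w: "w = commutator_basis h"
    by (auto simp: w_def H_def commutator_basis_def A_h_basis_def weyl_mult_assoc)
  have C: "C = commutator_space h"
    by (simp add: C_def commutator_space_def)
  show ?thesis
    unfolding A_def Z_def H_def I w C p(2)
    using comm_yhat_center_mult_in_comm_set_x[of _ h] comm_yhat_center_mult_top[OF p(1)]
      commutator_space_eq_center_span[OF p(1)] center_span_direct[OF p(1) \<open>h \<noteq> 0\<close>]
      h_mult_A_h_eq[OF p(1)] commutator_space_inter_corner[OF p(1) \<open>h \<noteq> 0\<close>] p
    by (simp add: center_span_def)
qed

end
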